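(* Let $H$ be a connected graph. Then $S_2(S_2(H))$ is a minimal DPDP-graph if and only if $H$ has either exactly one edge or exactly one loop (i.e., $H$ has exactly one edge, counting loops).
   Context: Graphs are finite and may have multiple edges and loops. A leaf is a vertex of degree one. A set $D\subseteq V(G)$ is dominating if every vertex outside $D$ has a neighbor in $D$; $P$ is paired-dominating if it is dominating and the subgraph induced by $P$ has a perfect matching. A DPDP-graph is a graph $G$ admitting disjoint sets $D,P$ with $V(G)=D\cup P$, $D$ dominating and $P$ paired-dominating; a minimal DPDP-graph is a DPDP-graph no proper spanning subgraph of which is a DPDP-graph. 2-subdivision graph: for a graph $H$ with no isolated vertex, set of leaves $L_H$, and $\alpha:L_H\to\mathbb{N}=\{1,2,\dots\}$, $S_2(H)$ has vertex set $(V_H\setminus L_H)\cup\{(v,i): v\in L_H, 1\le i\le \alpha(v)\}$ together with two new vertices for each edge $e$ of $H$ ($u_e,v_e$ if $e$ joins $u\ne v$; $v_e^1,v_e^2$ if $e$ is a loop at $v$). Its edges are: the edge joining the two new vertices of each $e$; for $v\in V_H\setminus L_H$, $vv_e$ for each non-loop edge $e$ at $v$ and $vv_e^1,vv_e^2$ for each loop $e$ at $v$; for $v\in L_H$ with incident edge $e$, the edges $v_e(v,i)$, $1\le i\le\alpha(v)$. For a graph consisting of a single vertex (no edges), $S_2$ is taken to be the graph itself. *)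

theory Defs
  imports Main
begin

text \<open>Finite multigraphs with loops: each edge has a set of one (loop) or two end vertices.\<close>

record ('v,'e) mgraph =
  verts :: "'v set"
  edges :: "'e set"
  ends  :: "'e \<Rightarrow> 'v set"

definition wf_mgraph :: "('v,'e) mgraph \<Rightarrow> bool" where
  "wf_mgraph G \<longleftrightarrow> finite (verts G) \<and> finite (edges G) \<and>
     (\<forall>e\<in>edges G. ends G e \<subseteq> verts G \<and> ends G e \<noteq> {} \<and> card (ends G e) \<le> 2)"

definition is_loop :: "('v,'e) mgraph \<Rightarrow> 'e \<Rightarrow> bool" where
  "is_loop G e \<longleftrightarrow> card (ends G e) = 1"

definition degree :: "('v,'e) mgraph \<Rightarrow> 'v \<Rightarrow> nat" where
  "degree G v = card {e\<in>edges G. v \<in> ends G e \<and> \<not> is_loop G e}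
              + 2 * card {e\<in>edges G. ends G e = {v}}"

definition leaves :: "('v,'e) mgraph \<Rightarrow> 'v set" where
  "leaves G = {v\<in>verts G. degree G v = 1}"

definition adj :: "('v,'e) mgraph \<Rightarrow> 'v \<Rightarrow> 'v \<Rightarrow> bool" where
  "adj G u v \<longleftrightarrow> (\<exists>e\<in>edges G. ends G e = {u, v})"

definition connected :: "('v,'e) mgraph \<Rightarrow> bool" where
  "connected G \<longleftrightarrow> verts G \<noteq> {} \<and>
     (\<forall>u\<in>verts G. \<forall>v\<in>verts G. (adj G)\<^sup>*\<^sup>* u v)"

definition dominating :: "('v,'e) mgraph \<Rightarrow> 'v set \<Rightarrow> bool" where
  "dominating G D \<longleftrightarrow> D \<subseteq> verts G \<and> (\<forall>v\<in>verts G - D. \<exists>u\<in>D. adj G u v)"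

definition has_perfect_matching_on :: "('v,'e) mgraph \<Rightarrow> 'v set \<Rightarrow> bool" where
  "has_perfect_matching_on G P \<longleftrightarrow>
     (\<exists>M\<subseteq>edges G. (\<forall>e\<in>M. card (ends G e) = 2 \<and> ends G e \<subseteq> P) \<and>
                    (\<forall>v\<in>P. \<exists>!e. e \<in> M \<and> v \<in> ends G e))"

definition paired_dominating :: "('v,'e) mgraph \<Rightarrow> 'v set \<Rightarrow> bool" where
  "paired_dominating G P \<longleftrightarrow> dominating G P \<and> has_perfect_matching_on G P"

definition DPDP :: "('v,'e) mgraph \<Rightarrow> bool" where
  "DPDP G \<longleftrightarrow> (\<exists>D P. D \<inter> P = {} \<and> D \<union> P = verts G \<and>
                   dominating G D \<and> paired_dominating G P)"

definition minimal_DPDP :: "('v,'e) mgraph \<Rightarrow> bool" where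
  "minimal_DPDP G \<longleftrightarrow> DPDP G \<and> (\<forall>F. F \<subset> edges G \<longrightarrow> \<not> DPDP (G\<lparr>edges := F\<rparr>))"

datatype ('v,'e) s2v = Orig 'v | Pend 'v nat | Sub 'e 'v | LoopSub 'e bool
datatype ('v,'e) s2e = Mid 'e | Att 'e 'v | LAtt 'e bool | PendE 'v nat

definition S2 :: "('v,'e) mgraph \<Rightarrow> ('v \<Rightarrow> nat) \<Rightarrow> (('v,'e) s2v, ('v,'e) s2e) mgraph" where
  "S2 H \<alpha> = \<lparr>
     verts = Orig ` (verts H - leaves H)
           \<union> {Pend v i | v i. v \<in> leaves H \<and> 1 \<le> i \<and> i \<le> \<alpha> v}
           \<union> {Sub e x | e x. e \<in> edges H \<and> \<not> is_loop H e \<and> x \<in> ends H e}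
           \<union> {LoopSub e b | e b. e \<in> edges H \<and> is_loop H e},
     edges = Mid ` edges H
           \<union> {Att e v | e v. e \<in> edges H \<and> \<not> is_loop H e \<and> v \<in> ends H e \<and> v \<notin> leaves H}
           \<union> {LAtt e b | e b. e \<in> edges H \<and> is_loop H e}
           \<union> {PendE v i | v i. v \<in> leaves H \<and> 1 \<le> i \<and> i \<le> \<alpha> v},
     ends = (\<lambda>f. case f of
              Mid e \<Rightarrow> (if is_loop H e then {LoopSub e True, LoopSub e False}
                        else (\<lambda>x. Sub e x) ` ends H e)
            | Att e v \<Rightarrow> {Orig v, Sub e v}
            | LAtt e b \<Rightarrow> insert (LoopSub e b) (Orig ` ends H e)
            | PendE v i \<Rightarrow> insert (Pend v i) ((\<lambda>e. Sub e v) ` {e\<in>edges H. v \<in> ends H e}))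
   \<rparr>"

end

(* Write K for S2 (S2 H). If H is a single loop, K is a 9-cycle; if H is a single link, K is a
   tree. In both cases the pendant vertices of a spanning subgraph lie in D and force the pattern
   D P P D inwards; this forcing needs every edge of K, so no proper spanning subgraph is DPDP.
   If H is connected with at least two edges, it has a loop sharing a vertex with another edge
   or a loopless vertex of degree at least two. An edgeless H gives an edgeless K,
   which is not DPDP at all. *)

theory Submission
  imports Defs
begin

lemma adj_sym: "adj G u v \<longleftrightarrow> adj G v u"
  unfolding adj_def by (auto simp: insert_commute)

lemma wf_mgraph_endsE:
  assumes "wf_mgraph H" "e \<in> edges H"
  obtains (loop) v where "ends H e = {v}" "v \<in> verts H" "is_loop H e"
    | (nonloop) a b where "ends H e = {a,b}" "a \<noteq> b" "a \<in> verts H" "b \<in> verts H" "\<not> is_loop H e"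
proof -
  have fin: "finite (ends H e)" and ne: "ends H e \<noteq> {}" and le: "card (ends H e) \<le> 2"
    and sub: "ends H e \<subseteq> verts H"
    using assms unfolding wf_mgraph_def by (auto intro: finite_subset)
  have "card (ends H e) = 1 \<or> card (ends H e) = 2" using fin ne le
    by (metis One_nat_def card_0_eq le_Suc_eq le_zero_eq numeral_2_eq_2)
  then show ?thesis
  proof
    assume c: "card (ends H e) = 1"
    then obtain v where "ends H e = {v}" by (auto simp: card_Suc_eq)
    then show ?thesis using loop sub c unfolding is_loop_def by auto
  next
    assume c: "card (ends H e) = 2"
    then obtain a b where "ends H e = {a,b}" "a \<noteq> b" by (auto simp: card_Suc_eq numeral_2_eq_2)
    then show ?thesis using nonloop sub c unfolding is_loop_def by auto
  qed
qed

lemma ends_subset_verts: "wf_mgraph H \<Longrightarrow> e \<in> edges H \<Longrightarrow> v \<in> ends H e \<Longrightarrow> v \<in> verts H"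
  by (auto simp: wf_mgraph_def)

lemma leaves_subset_verts: "leaves H \<subseteq> verts H"
  by (auto simp: leaves_def)

lemma two_ends_other:
  assumes "card (ends G g) = 2" "x \<in> ends G g"
  obtains y where "y \<noteq> x" "ends G g = {x, y}"
proof -
  obtain a b where "ends G g = {a, b}" "a \<noteq> b" using assms(1) card_2_iff by metis
  then show ?thesis using assms(2) that by (metis empty_iff insert_commute insert_iff)
qed

lemma degree_eq_card_loops:
  assumes "wf_mgraph H"
  shows "degree H v = card {e\<in>edges H. v \<in> ends H e \<and> \<not> is_loop H e}
                    + 2 * card {e\<in>edges H. is_loop H e \<and> v \<in> ends H e}"
proof -
  have "{e\<in>edges H. ends H e = {v}} = {e\<in>edges H. is_loop H e \<and> v \<in> ends H e}"
  proof (intro set_eqI iffI)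
    fix e assume "e \<in> {e\<in>edges H. is_loop H e \<and> v \<in> ends H e}"
    then show "e \<in> {e\<in>edges H. ends H e = {v}}"
      by (cases rule: wf_mgraph_endsE[OF assms, of e]) auto
  qed (auto simp: is_loop_def)
  then show ?thesis unfolding degree_def by simp
qed

lemma degree_loopless:
  assumes "\<forall>g\<in>edges G. card (ends G g) = 2"
  shows "degree G x = card {g\<in>edges G. x \<in> ends G g}"
proof -
  have "{e\<in>edges G. x \<in> ends G e \<and> \<not> is_loop G e} = {g\<in>edges G. x \<in> ends G g}"
    using assms by (auto simp: is_loop_def)
  moreover have "{e\<in>edges G. ends G e = {x}} = {}" using assms by fastforce
  ultimately show ?thesis unfolding degree_def by (simp only:) simp
qed

lemma loopless_leaf_iff:
  assumes "\<forall>g\<in>edges G. card (ends G g) = 2"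
  shows "x \<in> leaves G \<longleftrightarrow> x \<in> verts G \<and> card {g\<in>edges G. x \<in> ends G g} = 1"
  using degree_loopless[OF assms] by (simp add: leaves_def)

lemma loopless_not_leaf:
  assumes "\<forall>g\<in>edges G. card (ends G g) = 2" and "a \<in> edges G" "b \<in> edges G" "a \<noteq> b"
    and "x \<in> ends G a" "x \<in> ends G b"
  shows "x \<notin> leaves G"
proof
  assume "x \<in> leaves G"
  then have "card {g\<in>edges G. x \<in> ends G g} = 1" using loopless_leaf_iff[OF assms(1)] by blast
  then obtain g where "{g\<in>edges G. x \<in> ends G g} = {g}" by (rule card_1_singletonE)
  then show False using assms(2-6) by (metis (mono_tags, lifting) mem_Collect_eq singletonD)
qed

lemma leaf_unique_edge:
  assumes "wf_mgraph H" "v \<in> leaves H"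
  obtains e where "e \<in> edges H" "v \<in> ends H e" "\<not> is_loop H e"
    "\<And>e'. e' \<in> edges H \<Longrightarrow> v \<in> ends H e' \<Longrightarrow> e' = e"
proof -
  let ?A = "{e\<in>edges H. v \<in> ends H e \<and> \<not> is_loop H e}"
  let ?B = "{e\<in>edges H. is_loop H e \<and> v \<in> ends H e}"
  have fin: "finite ?B" using assms(1) unfolding wf_mgraph_def by auto
  have "card ?A + 2 * card ?B = 1"
    using assms degree_eq_card_loops[OF assms(1)] unfolding leaves_def by auto
  then have "card ?A = 1" "card ?B = 0" by presburger+
  then obtain e where A: "?A = {e}" by (auto simp: card_Suc_eq)
  have B: "?B = {}" using fin \<open>card ?B = 0\<close> by simp
  show ?thesis
  proof (rule that)
    show "e \<in> edges H" "v \<in> ends H e" "\<not> is_loop H e" using A by auto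
    fix e' assume "e' \<in> edges H" "v \<in> ends H e'"
    then show "e' = e" using A B by (cases "is_loop H e'") auto
  qed
qed

lemma loop_end_not_leaf:
  "wf_mgraph H \<Longrightarrow> e \<in> edges H \<Longrightarrow> is_loop H e \<Longrightarrow> v \<in> ends H e \<Longrightarrow> v \<notin> leaves H"
  by (metis leaf_unique_edge)

lemma non_leaf_other_edge:
  assumes wf: "wf_mgraph H" and v: "v \<in> verts H" "v \<notin> leaves H"
    and e: "e \<in> edges H" "v \<in> ends H e" "\<not> is_loop H e"
  obtains e' where "e' \<in> edges H" "v \<in> ends H e'" "e' \<noteq> e"
proof -
  have "\<exists>e'. e' \<in> edges H \<and> v \<in> ends H e' \<and> e' \<noteq> e"
  proof (rule ccontr)
    assume none: "\<nexists>e'. e' \<in> edges H \<and> v \<in> ends H e' \<and> e' \<noteq> e"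
    then have A: "{e\<in>edges H. v \<in> ends H e \<and> \<not> is_loop H e} = {e}"
      using e by blast
    have B: "{e\<in>edges H. is_loop H e \<and> v \<in> ends H e} = {}" using none e by blast
    have "degree H v = 1" unfolding degree_eq_card_loops[OF wf] A B by simp
    then show False using v by (simp add: leaves_def)
  qed
  then show ?thesis using that by blast
qed

lemma connected_closed_subset:
  assumes "connected H" "x \<in> S" "x \<in> verts H" and closed: "\<And>a b. a \<in> S \<Longrightarrow> adj H a b \<Longrightarrow> b \<in> S"
  shows "verts H \<subseteq> S"
proof
  fix y assume "y \<in> verts H"
  then have "(adj H)\<^sup>*\<^sup>* x y" using assms(1,3) unfolding connected_def by blast
  then show "y \<in> S"
    by (induction rule: rtranclp_induct) (simp_all add: assms(2) closed)
qed

lemma connected_no_isolated: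
  assumes wf: "wf_mgraph H" and "connected H" and e: "e \<in> edges H"
  shows "\<forall>v\<in>verts H. \<exists>e\<in>edges H. v \<in> ends H e"
proof -
  obtain x where x: "x \<in> ends H e" using wf e by (cases rule: wf_mgraph_endsE) auto
  have "verts H \<subseteq> {x. \<exists>e\<in>edges H. x \<in> ends H e}"
    by (rule connected_closed_subset[OF \<open>connected H\<close>, of x])
      (use x e ends_subset_verts[OF wf] in \<open>auto simp: adj_def\<close>)
  then show ?thesis by blast
qed

lemma connected_edge_at_ends_unique:
  assumes wf: "wf_mgraph H" and "connected H" and e0: "e0 \<in> edges H"
    and unique: "\<And>e x. e \<in> edges H \<Longrightarrow> x \<in> ends H e0 \<Longrightarrow> x \<in> ends H e \<Longrightarrow> e = e0"
  shows "edges H = {e0}" "verts H = ends H e0"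
proof -
  obtain x where x: "x \<in> ends H e0" using wf e0 by (cases rule: wf_mgraph_endsE) auto
  have V: "verts H \<subseteq> ends H e0"
  proof (rule connected_closed_subset[OF \<open>connected H\<close> x ends_subset_verts[OF wf e0 x]])
    fix a b assume a: "a \<in> ends H e0" and "adj H a b"
    then obtain f where f: "f \<in> edges H" "ends H f = {a, b}" unfolding adj_def by blast
    then have "f = e0" using unique[OF f(1) a] by simp
    then show "b \<in> ends H e0" using f by simp
  qed
  have "e = e0" if "e \<in> edges H" for e
  proof -
    have "ends H e \<noteq> {}" "ends H e \<subseteq> verts H" using wf that by (auto simp: wf_mgraph_def)
    then obtain x where "x \<in> ends H e" "x \<in> ends H e0" using V by blast
    then show ?thesis using unique[OF that] by simp
  qed
  then show "edges H = {e0}" using e0 by blast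
  show "verts H = ends H e0" using V ends_subset_verts[OF wf e0] by blast
qed

lemma connected_card_edges_ne_1E:
  assumes wf: "wf_mgraph H" and "connected H" and e0: "e0 \<in> edges H" and "card (edges H) \<noteq> 1"
  obtains (loop_and_edge) e v e' where "e \<in> edges H" "is_loop H e" "v \<in> ends H e"
      "e' \<in> edges H" "v \<in> ends H e'" "e' \<noteq> e"
    | (branch) w e where "w \<in> verts H" "w \<notin> leaves H" "\<forall>e\<in>edges H. w \<in> ends H e \<longrightarrow> \<not> is_loop H e"
      "e \<in> edges H" "w \<in> ends H e"
proof (rule ccontr)
  assume no_case: "\<not> thesis"
  have "e = e0" if e: "e \<in> edges H" and x: "x \<in> ends H e0" "x \<in> ends H e" for e x
  proof (cases "is_loop H e0")
    case True
    show ?thesis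
    proof (rule ccontr)
      assume "e \<noteq> e0"
      then show False using loop_and_edge[OF e0 True x(1) e x(2)] no_case by blast
    qed
  next
    case nonloop: False
    have xv: "x \<in> verts H" using ends_subset_verts[OF wf e0 x(1)] .
    show ?thesis
    proof (cases "x \<in> leaves H")
      case True
      then show ?thesis using leaf_unique_edge[OF wf True] e e0 x by metis
    next
      case False
      show ?thesis
      proof (cases "\<exists>l\<in>edges H. x \<in> ends H l \<and> is_loop H l")
        case True
        then obtain l where l: "l \<in> edges H" "x \<in> ends H l" "is_loop H l" by blast
        have "e0 \<noteq> l" using l nonloop by blast
        then show ?thesis using loop_and_edge[OF l(1,3,2) e0 x(1)] no_case by blast
      next
        case no_loop: False
        then show ?thesis using branch[OF xv False _ e0 x(1)] no_case by blast
      qed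
    qed
  qed
  then have "edges H = {e0}" using connected_edge_at_ends_unique[OF wf \<open>connected H\<close> e0] by blast
  then show False using \<open>card (edges H) \<noteq> 1\<close> by simp
qed

lemma S2_verts_Orig[simp]: "Orig v \<in> verts (S2 H \<alpha>) \<longleftrightarrow> v \<in> verts H \<and> v \<notin> leaves H"
  by (auto simp: S2_def)

lemma S2_verts_Pend[simp]: "Pend v i \<in> verts (S2 H \<alpha>) \<longleftrightarrow> v \<in> leaves H \<and> 1 \<le> i \<and> i \<le> \<alpha> v"
  by (auto simp: S2_def)

lemma S2_verts_Sub[simp]:
  "Sub e v \<in> verts (S2 H \<alpha>) \<longleftrightarrow> e \<in> edges H \<and> \<not> is_loop H e \<and> v \<in> ends H e"
  by (auto simp: S2_def)

lemma S2_verts_LoopSub[simp]: "LoopSub e b \<in> verts (S2 H \<alpha>) \<longleftrightarrow> e \<in> edges H \<and> is_loop H e"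
  by (auto simp: S2_def)

lemma S2_edges_Mid[simp]: "Mid e \<in> edges (S2 H \<alpha>) \<longleftrightarrow> e \<in> edges H"
  by (auto simp: S2_def)

lemma S2_edges_Att[simp]:
  "Att e v \<in> edges (S2 H \<alpha>) \<longleftrightarrow> e \<in> edges H \<and> \<not> is_loop H e \<and> v \<in> ends H e \<and> v \<notin> leaves H"
  by (auto simp: S2_def)

lemma S2_edges_LAtt[simp]: "LAtt e b \<in> edges (S2 H \<alpha>) \<longleftrightarrow> e \<in> edges H \<and> is_loop H e"
  by (auto simp: S2_def)

lemma S2_edges_PendE[simp]: "PendE v i \<in> edges (S2 H \<alpha>) \<longleftrightarrow> v \<in> leaves H \<and> 1 \<le> i \<and> i \<le> \<alpha> v"
  by (auto simp: S2_def)

lemma S2_ends_Mid[simp]: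
  "ends (S2 H \<alpha>) (Mid e) =
     (if is_loop H e then {LoopSub e True, LoopSub e False} else (\<lambda>x. Sub e x) ` ends H e)"
  by (auto simp: S2_def)

lemma S2_ends_Att[simp]: "ends (S2 H \<alpha>) (Att e v) = {Orig v, Sub e v}"
  by (auto simp: S2_def)

lemma S2_ends_LAtt[simp]: "ends (S2 H \<alpha>) (LAtt e b) = insert (LoopSub e b) (Orig ` ends H e)"
  by (auto simp: S2_def)

lemma S2_ends_PendE_raw:
  "ends (S2 H \<alpha>) (PendE v i) = insert (Pend v i) ((\<lambda>e. Sub e v) ` {e\<in>edges H. v \<in> ends H e})"
  by (auto simp: S2_def)

lemma S2_ends_PendE:
  assumes "wf_mgraph H" "v \<in> leaves H" "e \<in> edges H" "v \<in> ends H e"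
  shows "ends (S2 H \<alpha>) (PendE v i) = {Pend v i, Sub e v}"
proof -
  have "{e\<in>edges H. v \<in> ends H e} = {e}"
    using leaf_unique_edge[OF assms(1,2)] assms(3,4) by blast
  then show ?thesis by (simp add: S2_ends_PendE_raw)
qed

lemma S2_edgesE:
  assumes "f \<in> edges (S2 H \<alpha>)"
  obtains (Mid) e where "f = Mid e" "e \<in> edges H"
    | (Att) e v where "f = Att e v" "e \<in> edges H" "\<not> is_loop H e" "v \<in> ends H e" "v \<notin> leaves H"
    | (LAtt) e b where "f = LAtt e b" "e \<in> edges H" "is_loop H e"
    | (PendE) v i where "f = PendE v i" "v \<in> leaves H" "1 \<le> i" "i \<le> \<alpha> v"
  using assms by (cases f) auto

lemma S2_vertsE:
  assumes "x \<in> verts (S2 H \<alpha>)"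
  obtains (Orig) v where "x = Orig v" "v \<in> verts H" "v \<notin> leaves H"
    | (Pend) v i where "x = Pend v i" "v \<in> leaves H" "1 \<le> i" "i \<le> \<alpha> v"
    | (Sub) e v where "x = Sub e v" "e \<in> edges H" "\<not> is_loop H e" "v \<in> ends H e"
    | (LoopSub) e b where "x = LoopSub e b" "e \<in> edges H" "is_loop H e"
  using assms by (cases x) auto

lemma S2_edges_endsE:
  assumes wf: "wf_mgraph H" and g: "g \<in> edges (S2 H \<alpha>)"
  obtains (MidN) e a b where "g = Mid e" "e \<in> edges H" "ends H e = {a,b}" "a \<noteq> b" "\<not> is_loop H e"
      "ends (S2 H \<alpha>) g = {Sub e a, Sub e b}"
    | (MidL) e v where "g = Mid e" "e \<in> edges H" "ends H e = {v}" "is_loop H e"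
      "ends (S2 H \<alpha>) g = {LoopSub e True, LoopSub e False}"
    | (Att) e v where "g = Att e v" "e \<in> edges H" "\<not> is_loop H e" "v \<in> ends H e" "v \<notin> leaves H"
      "ends (S2 H \<alpha>) g = {Orig v, Sub e v}"
    | (LAtt) e b v where "g = LAtt e b" "e \<in> edges H" "is_loop H e" "ends H e = {v}"
      "ends (S2 H \<alpha>) g = {LoopSub e b, Orig v}"
    | (PendE) v i e where "g = PendE v i" "v \<in> leaves H" "1 \<le> i" "i \<le> \<alpha> v" "e \<in> edges H"
      "v \<in> ends H e" "\<not> is_loop H e" "ends (S2 H \<alpha>) g = {Pend v i, Sub e v}"
  using g
proof (cases rule: S2_edgesE)
  case (Mid e)
  then show ?thesis using MidN MidL by (cases rule: wf_mgraph_endsE[OF wf Mid(2)]) simp_all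
next
  case (Att e v)
  then show ?thesis using that(3) by simp
next
  case (LAtt e b)
  then show ?thesis using that(4) by (cases rule: wf_mgraph_endsE[OF wf LAtt(2)]) simp_all
next
  case (PendE v i)
  obtain e where e: "e \<in> edges H" "v \<in> ends H e" "\<not> is_loop H e"
    using leaf_unique_edge[OF wf PendE(2)] by metis
  show ?thesis using that(5)[OF PendE e] S2_ends_PendE[OF wf PendE(2) e(1,2)] PendE(1) by simp
qed

lemma S2_edges_at_OrigE:
  assumes "g \<in> edges (S2 H \<alpha>)" "Orig v \<in> ends (S2 H \<alpha>) g"
  obtains (Att) e where "g = Att e v" "e \<in> edges H" "\<not> is_loop H e" "v \<in> ends H e"
    | (LAtt) e b where "g = LAtt e b" "e \<in> edges H" "is_loop H e" "v \<in> ends H e"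
  using assms(1)
  by (cases rule: S2_edgesE) (use assms(2) that in \<open>auto simp: S2_ends_PendE_raw split: if_splits\<close>)

lemma S2_edges_at_Sub:
  assumes "g \<in> edges (S2 H \<alpha>)" "Sub e v \<in> ends (S2 H \<alpha>) g"
  shows "g = Mid e \<or> g = Att e v \<or> (\<exists>i. g = PendE v i)"
  using assms(1)
  by (cases rule: S2_edgesE) (use assms(2) in \<open>auto simp: S2_ends_PendE_raw split: if_splits\<close>)

lemma S2_Pend_in_ends:
  assumes "g \<in> edges (S2 H \<alpha>)" "Pend v i \<in> ends (S2 H \<alpha>) g"
  shows "g = PendE v i"
  using assms(1)
  by (cases rule: S2_edgesE) (use assms(2) in \<open>auto simp: S2_ends_PendE_raw split: if_splits\<close>)

lemma S2_loopless:
  assumes "wf_mgraph H"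
  shows "\<forall>f\<in>edges (S2 H \<alpha>). card (ends (S2 H \<alpha>) f) = 2"
proof
  fix f assume "f \<in> edges (S2 H \<alpha>)"
  then show "card (ends (S2 H \<alpha>) f) = 2"
    by (cases rule: S2_edges_endsE[OF assms]) (auto dest: loop_end_not_leaf[OF assms])
qed

lemma S2_wf:
  assumes wf: "wf_mgraph H"
  shows "wf_mgraph (S2 H \<alpha>)"
proof -
  have fv: "finite (verts H)" and fe: "finite (edges H)" using wf by (auto simp: wf_mgraph_def)
  have fends: "\<And>e. e \<in> edges H \<Longrightarrow> finite (ends H e)" using wf
    by (auto simp: wf_mgraph_def intro: finite_subset)
  have "verts (S2 H \<alpha>) \<subseteq> Orig ` verts H \<union> (\<Union>v\<in>verts H. Pend v ` {1..\<alpha> v})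
     \<union> (\<Union>e\<in>edges H. (\<lambda>x. Sub e x) ` ends H e) \<union> (\<Union>e\<in>edges H. {LoopSub e True, LoopSub e False})"
    using leaves_subset_verts[of H] by (auto simp: S2_def)
  then have "finite (verts (S2 H \<alpha>))" by (rule finite_subset) (use fv fe fends in auto)
  moreover have "edges (S2 H \<alpha>) \<subseteq> Mid ` edges H \<union> (\<Union>e\<in>edges H. (\<lambda>x. Att e x) ` ends H e)
     \<union> (\<Union>e\<in>edges H. {LAtt e True, LAtt e False}) \<union> (\<Union>v\<in>verts H. PendE v ` {1..\<alpha> v})"
    using leaves_subset_verts[of H] by (auto simp: S2_def)
  then have "finite (edges (S2 H \<alpha>))" by (rule finite_subset) (use fv fe fends in auto)
  moreover have "ends (S2 H \<alpha>) f \<subseteq> verts (S2 H \<alpha>)" if "f \<in> edges (S2 H \<alpha>)" for f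
    using wf that
  proof (cases rule: S2_edges_endsE)
    case (Att e v)
    then show ?thesis using ends_subset_verts[OF wf] by simp
  next
    case (LAtt e b v)
    then show ?thesis using ends_subset_verts[OF wf] loop_end_not_leaf[OF wf] by simp
  qed simp_all
  ultimately show ?thesis using S2_loopless[OF wf, of \<alpha>] unfolding wf_mgraph_def by auto
qed

lemma S2_Orig_not_leaf:
  assumes wf: "wf_mgraph H"
  shows "Orig v \<notin> leaves (S2 H \<alpha>)"
proof
  let ?G = "S2 H \<alpha>"
  note not_leaf = loopless_not_leaf[OF S2_loopless[OF wf, of \<alpha>]]
  assume leaf: "Orig v \<in> leaves ?G"
  then have v: "v \<in> verts H" "v \<notin> leaves H" by (auto simp: leaves_def)
  have "card {g\<in>edges ?G. Orig v \<in> ends ?G g} = 1"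
    using leaf loopless_leaf_iff[OF S2_loopless[OF wf, of \<alpha>]] by blast
  then obtain g where "{g\<in>edges ?G. Orig v \<in> ends ?G g} = {g}" by (rule card_1_singletonE)
  then have "g \<in> edges ?G" "Orig v \<in> ends ?G g" by auto
  then obtain e where e: "e \<in> edges H" "v \<in> ends H e" by (cases rule: S2_edges_at_OrigE) auto
  show False
  proof (cases "is_loop H e")
    case True
    then show False using not_leaf[of "LAtt e True" "LAtt e False"] leaf e by simp
  next
    case False
    obtain e' where e': "e' \<in> edges H" "v \<in> ends H e'" "e' \<noteq> e"
      using non_leaf_other_edge[OF wf v e False] .
    show False
    proof (cases "is_loop H e'")
      case True
      then show False using not_leaf[of "LAtt e' True" "LAtt e' False"] leaf e' by simp
    next
      case False
      then show False using not_leaf[of "Att e v" "Att e' v"] leaf e e' v \<open>\<not> is_loop H e\<close> by simp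
    qed
  qed
qed

lemma S2_Sub_not_leaf:
  assumes wf: "wf_mgraph H" and al: "\<forall>v\<in>leaves H. 1 \<le> \<alpha> v"
  shows "Sub e v \<notin> leaves (S2 H \<alpha>)"
proof
  note not_leaf = loopless_not_leaf[OF S2_loopless[OF wf, of \<alpha>]]
  assume leaf: "Sub e v \<in> leaves (S2 H \<alpha>)"
  then have e: "e \<in> edges H" "\<not> is_loop H e" "v \<in> ends H e" by (auto simp: leaves_def)
  show False
  proof (cases "v \<in> leaves H")
    case True
    then show False using not_leaf[of "PendE v 1" "Mid e"] leaf e al by (auto simp: S2_ends_PendE_raw)
  next
    case False
    then show False using not_leaf[of "Att e v" "Mid e"] leaf e by simp
  qed
qed

lemma S2_LoopSub_not_leaf:
  assumes wf: "wf_mgraph H"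
  shows "LoopSub e b \<notin> leaves (S2 H \<alpha>)"
proof
  assume leaf: "LoopSub e b \<in> leaves (S2 H \<alpha>)"
  then have "e \<in> edges H" "is_loop H e" by (auto simp: leaves_def)
  then show False using loopless_not_leaf[OF S2_loopless[OF wf, of \<alpha>], of "LAtt e b" "Mid e"] leaf by simp
qed

lemma S2_Pend_leaf_iff:
  assumes wf: "wf_mgraph H"
  shows "Pend v i \<in> leaves (S2 H \<alpha>) \<longleftrightarrow> v \<in> leaves H \<and> 1 \<le> i \<and> i \<le> \<alpha> v"
proof -
  have "{g\<in>edges (S2 H \<alpha>). Pend v i \<in> ends (S2 H \<alpha>) g} = {PendE v i}"
    if "v \<in> leaves H" "1 \<le> i" "i \<le> \<alpha> v"
    using S2_Pend_in_ends[of _ H \<alpha> v i] that by (auto simp: S2_ends_PendE_raw)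
  then show ?thesis using loopless_leaf_iff[OF S2_loopless[OF wf, of \<alpha>]] by auto
qed

lemma S2_leaves:
  assumes wf: "wf_mgraph H" and al: "\<forall>v\<in>leaves H. 1 \<le> \<alpha> v"
  shows "leaves (S2 H \<alpha>) = {Pend v i | v i. v \<in> leaves H \<and> 1 \<le> i \<and> i \<le> \<alpha> v}"
proof (intro set_eqI iffI)
  fix x assume x: "x \<in> leaves (S2 H \<alpha>)"
  then have "x \<in> verts (S2 H \<alpha>)" by (simp add: leaves_def)
  then show "x \<in> {Pend v i | v i. v \<in> leaves H \<and> 1 \<le> i \<and> i \<le> \<alpha> v}"
    by (cases rule: S2_vertsE)
      (use x S2_Orig_not_leaf[OF wf] S2_Sub_not_leaf[OF wf al] S2_LoopSub_not_leaf[OF wf] in auto)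
qed (auto simp: S2_Pend_leaf_iff[OF wf])

lemma S2_no_isolated:
  assumes ni: "\<forall>v\<in>verts H. \<exists>e\<in>edges H. v \<in> ends H e"
  shows "\<forall>x\<in>verts (S2 H \<alpha>). \<exists>g\<in>edges (S2 H \<alpha>). x \<in> ends (S2 H \<alpha>) g"
proof
  fix x assume "x \<in> verts (S2 H \<alpha>)"
  then show "\<exists>g\<in>edges (S2 H \<alpha>). x \<in> ends (S2 H \<alpha>) g"
  proof (cases rule: S2_vertsE)
    case (Orig v)
    then obtain e where e: "e \<in> edges H" "v \<in> ends H e" using ni by auto
    show ?thesis
    proof (cases "is_loop H e")
      case True then show ?thesis using e Orig by (intro bexI[of _ "LAtt e True"]) auto
    next
      case False then show ?thesis using e Orig by (intro bexI[of _ "Att e v"]) auto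
    qed
  next
    case (Pend v i)
    then show ?thesis by (intro bexI[of _ "PendE v i"]) (auto simp: S2_ends_PendE_raw)
  next
    case (Sub e v)
    then show ?thesis by (intro bexI[of _ "Mid e"]) auto
  next
    case (LoopSub e b)
    then show ?thesis by (intro bexI[of _ "Mid e"]) auto
  qed
qed

text \<open>The consequences of a DPDP-partition \<open>(D, P)\<close> that the minimality arguments use.\<close>

definition DPDP_colouring :: "('v,'e) mgraph \<Rightarrow> 'v set \<Rightarrow> bool" where
  "DPDP_colouring G P \<longleftrightarrow> P \<subseteq> verts G \<and> (\<forall>a\<in>verts G. \<exists>b. adj G a b \<and> (b \<in> P \<longleftrightarrow> a \<notin> P)) \<and>
     (\<forall>a\<in>P. \<exists>b. adj G a b \<and> b \<in> P)"

lemma DPDP_colouring_exists: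
  assumes "DPDP G"
  obtains P where "DPDP_colouring G P"
proof -
  obtain D P where DP: "D \<inter> P = {}" "D \<union> P = verts G" "dominating G D" "paired_dominating G P"
    using assms unfolding DPDP_def by blast
  obtain M where M: "M \<subseteq> edges G" "\<forall>e\<in>M. card (ends G e) = 2 \<and> ends G e \<subseteq> P"
    "\<forall>v\<in>P. \<exists>!e. e \<in> M \<and> v \<in> ends G e"
    using DP(4) unfolding paired_dominating_def has_perfect_matching_on_def by blast
  have "\<exists>b. adj G a b \<and> (b \<in> P \<longleftrightarrow> a \<notin> P)" if "a \<in> verts G" for a
  proof (cases "a \<in> P")
    case True
    then have "a \<in> verts G - D" using DP(1) that by blast
    then obtain u where "u \<in> D" "adj G u a" using DP(3) unfolding dominating_def by blast
    then show ?thesis using True DP(1) adj_sym[of G u a] by blast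
  next
    case False
    then have "a \<in> verts G - P" using that by blast
    then obtain u where "u \<in> P" "adj G u a"
      using DP(4) unfolding paired_dominating_def dominating_def by blast
    then show ?thesis using False adj_sym[of G u a] by blast
  qed
  moreover have "\<exists>b. adj G a b \<and> b \<in> P" if a: "a \<in> P" for a
  proof -
    have "\<exists>!e. e \<in> M \<and> a \<in> ends G e" using M(3) a by blast
    then obtain e where e: "e \<in> M" "a \<in> ends G e" by blast
    then have "card (ends G e) = 2" using M(2) by blast
    then obtain b where "ends G e = {a, b}" using two_ends_other e(2) by metis
    moreover have "b \<in> P" using M(2) e calculation by blast
    ultimately show ?thesis using e(1) M(1) unfolding adj_def by blast
  qed
  ultimately have "DPDP_colouring G P" using DP(2) unfolding DPDP_colouring_def by blast
  then show ?thesis by (rule that)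
qed

lemma DPDP_no_isolated:
  assumes "DPDP G" "a \<in> verts G"
  shows "\<exists>b. adj G a b"
proof -
  obtain P where "DPDP_colouring G P" using DPDP_colouring_exists[OF assms(1)] .
  then show ?thesis using assms(2) unfolding DPDP_colouring_def by blast
qed

lemma minimal_DPDP_delete_edge:
  assumes "minimal_DPDP G" "f \<in> edges G"
  shows "\<not> DPDP (G\<lparr>edges := edges G - {f}\<rparr>)"
  using assms unfolding minimal_DPDP_def by blast

lemma DPDP_colouring_forced_opposite:
  assumes "DPDP_colouring G P" "a \<in> verts G"
    and "\<And>b. adj G a b \<Longrightarrow> b = c \<or> (b \<in> P \<longleftrightarrow> a \<in> P)"
  shows "adj G a c" "c \<in> P \<longleftrightarrow> a \<notin> P"
  using assms unfolding DPDP_colouring_def by blast+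

lemma DPDP_colouring_forced_partner:
  assumes "DPDP_colouring G P" "a \<in> P"
    and "\<And>b. adj G a b \<Longrightarrow> b = c \<or> b \<notin> P"
  shows "adj G a c" "c \<in> P"
  using assms unfolding DPDP_colouring_def by blast+

lemma DPDP_colouring_pendant:
  assumes "DPDP_colouring G P" "a \<in> verts G" and "\<And>b. adj G a b \<Longrightarrow> b = c"
  shows "adj G a c" "a \<notin> P" "c \<in> P"
  using assms unfolding DPDP_colouring_def by metis+

text \<open>A 9-cycle with an edge missing falls apart into paths, and the ends of each path force the
  pattern \<open>D P P D\<close> inwards; on nine vertices this always strands some vertex. The constraints
  are propositional in the nine colours and the nine edges, so \<open>sat\<close> checks them.\<close>

lemma DPDP_colouring_cycle9:
  fixes c :: "nat \<Rightarrow> 'v" and present :: "nat \<Rightarrow> bool"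
  assumes col: "DPDP_colouring G P"
    and verts: "\<And>i. i < 9 \<Longrightarrow> c i \<in> verts G"
    and nbrs: "\<And>i b. i < 9 \<Longrightarrow> adj G (c i) b \<Longrightarrow>
      (b = c ((i + 1) mod 9) \<and> present i) \<or> (b = c ((i + 8) mod 9) \<and> present ((i + 8) mod 9))"
  shows "i < 9 \<Longrightarrow> present i"
proof -
  let ?succ = "\<lambda>i::nat. if i = 8 then 0 else i + 1" and ?pred = "\<lambda>i::nat. if i = 0 then 8 else i - 1"
  \<comment> \<open>explicit successors, so that each colour becomes the same numeral-indexed atom everywhere\<close>
  have mod9: "(i + 1) mod 9 = ?succ i" "(i + 8) mod 9 = ?pred i" if "i < 9" for i
    using that by presburger+
  have opp: "(present i \<and> (c (?succ i) \<in> P \<longleftrightarrow> c i \<notin> P)) \<or>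
      (present (?pred i) \<and> (c (?pred i) \<in> P \<longleftrightarrow> c i \<notin> P))" if i: "i < 9" for i
  proof -
    obtain b where "adj G (c i) b" "b \<in> P \<longleftrightarrow> c i \<notin> P"
      using col verts[OF i] unfolding DPDP_colouring_def by blast
    then show ?thesis using nbrs[OF i] unfolding mod9[OF i] by blast
  qed
  have partner: "c i \<in> P \<longrightarrow> (present i \<and> c (?succ i) \<in> P) \<or> (present (?pred i) \<and> c (?pred i) \<in> P)"
    if i: "i < 9" for i
    using col nbrs[OF i] unfolding mod9[OF i] DPDP_colouring_def by blast
  have "present 0 \<and> present 1 \<and> present 2 \<and> present 3 \<and> present 4 \<and> present 5 \<and> present 6
      \<and> present 7 \<and> present 8"
    using opp[of 0] opp[of 1] opp[of 2] opp[of 3] opp[of 4] opp[of 5] opp[of 6] opp[of 7] opp[of 8]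
      partner[of 0] partner[of 1] partner[of 2] partner[of 3] partner[of 4] partner[of 5]
      partner[of 6] partner[of 7] partner[of 8]
    by (simp, simp only: One_nat_def[symmetric] Suc_1) sat
  then show "i < 9 \<Longrightarrow> present i" by (simp add: less_Suc_eq numeral_eq_Suc) blast
qed

lemma DPDP_spanning_subgraph_cycle9:
  fixes c :: "nat \<Rightarrow> 'v" and f :: "nat \<Rightarrow> 'e"
  assumes ends_f: "\<And>j. j < 9 \<Longrightarrow> ends G (f j) = {c j, c ((j + 1) mod 9)}"
    and inj: "inj_on c {..<9}" and verts: "\<And>i. i < 9 \<Longrightarrow> c i \<in> verts G"
    and F: "F \<subseteq> f ` {..<9}" and D: "DPDP (G\<lparr>edges := F\<rparr>)"
  shows "f ` {..<9} \<subseteq> F"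
proof -
  obtain P where P: "DPDP_colouring (G\<lparr>edges := F\<rparr>) P" using DPDP_colouring_exists[OF D] .
  have "f i \<in> F" if "i < 9" for i
  proof (rule DPDP_colouring_cycle9[OF P, where c = c])
    fix i :: nat and b assume i: "i < 9" and "adj (G\<lparr>edges := F\<rparr>) (c i) b"
    then obtain h where h: "h \<in> F" "ends G h = {c i, b}" unfolding adj_def by auto
    obtain j where "j < 9" "h = f j" using F h(1) by auto
    with h have j: "j < 9" "f j \<in> F" "{c j, c ((j + 1) mod 9)} = {c i, b}"
      using ends_f by auto
    have j1: "(j + 1) mod 9 < 9" by simp
    from j(3) consider "c j = c i" "b = c ((j + 1) mod 9)" | "c ((j + 1) mod 9) = c i" "b = c j"
      by (auto simp: doubleton_eq_iff)
    then show "b = c ((i + 1) mod 9) \<and> f i \<in> F \<or> b = c ((i + 8) mod 9) \<and> f ((i + 8) mod 9) \<in> F"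
    proof cases
      case 1
      then have "j = i" using inj_onD[OF inj] i j(1) by blast
      then show ?thesis using 1 j(2) by simp
    next
      case 2
      then have "(j + 1) mod 9 = i" using inj_onD[OF inj] i j1 by blast
      then have "j = (i + 8) mod 9" using j(1) by presburger
      then show ?thesis using 2 j(2) by simp
    qed
  qed (use verts that in simp_all)
  then show ?thesis by blast
qed

lemma has_perfect_matching_onI:
  assumes "\<And>a. a \<in> P \<Longrightarrow> m a \<in> edges G \<and> card (ends G (m a)) = 2 \<and> ends G (m a) \<subseteq> P
    \<and> a \<in> ends G (m a) \<and> (\<forall>b\<in>ends G (m a). m b = m a)"
  shows "has_perfect_matching_on G P"
  unfolding has_perfect_matching_on_def
proof (intro exI[of _ "m ` P"] conjI ballI)
  show "m ` P \<subseteq> edges G" using assms by blast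
  fix e assume "e \<in> m ` P"
  then show "card (ends G e) = 2" "ends G e \<subseteq> P" using assms by blast+
next
  fix v assume v: "v \<in> P"
  show "\<exists>!e. e \<in> m ` P \<and> v \<in> ends G e"
  proof (rule ex1I[of _ "m v"])
    show "m v \<in> m ` P \<and> v \<in> ends G (m v)" using v assms by blast
    fix e assume "e \<in> m ` P \<and> v \<in> ends G e"
    then obtain b where "b \<in> P" "e = m b" "v \<in> ends G (m b)" by blast
    then show "e = m v" using assms by metis
  qed
qed

lemma DPDP_complementI:
  assumes "P \<subseteq> verts G" "has_perfect_matching_on G P"
    and "\<And>a. a \<in> P \<Longrightarrow> \<exists>u\<in>verts G - P. adj G u a"
    and "\<And>a. a \<in> verts G - P \<Longrightarrow> \<exists>u\<in>P. adj G u a"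
  shows "DPDP G"
  unfolding DPDP_def paired_dominating_def dominating_def
  by (rule exI[of _ "verts G - P"], rule exI[of _ P]) (use assms in auto)

lemma S2_loopless_edgesE:
  assumes wf: "wf_mgraph G" and loopless: "\<forall>g\<in>edges G. card (ends G g) = 2"
    and f: "f \<in> edges (S2 G \<beta>)"
  obtains (Mid) g x y where "f = Mid g" "g \<in> edges G" "ends G g = {x,y}" "x \<noteq> y"
      "ends (S2 G \<beta>) f = {Sub g x, Sub g y}"
    | (Att) g x where "f = Att g x" "g \<in> edges G" "x \<in> ends G g" "x \<notin> leaves G"
      "ends (S2 G \<beta>) f = {Orig x, Sub g x}"
    | (PendE) x k g where "f = PendE x k" "x \<in> leaves G" "1 \<le> k" "k \<le> \<beta> x" "g \<in> edges G"
      "x \<in> ends G g" "ends (S2 G \<beta>) f = {Pend x k, Sub g x}"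
  using wf f
proof (cases rule: S2_edges_endsE)
  case (MidL e v)
  then show ?thesis using loopless[rule_format, OF MidL(2)] by simp
next
  case (LAtt e b v)
  then show ?thesis using loopless[rule_format, OF LAtt(2)] by simp
qed (use that in auto)

lemma S2_loopless_adjE:
  assumes wf: "wf_mgraph G" and loopless: "\<forall>g\<in>edges G. card (ends G g) = 2"
    and F: "F \<subseteq> edges (S2 G \<beta>)" and ab: "adj ((S2 G \<beta>)\<lparr>edges := F\<rparr>) a b"
  obtains (Mid) g x y where "Mid g \<in> F" "g \<in> edges G" "ends G g = {x,y}" "x \<noteq> y"
      "a = Sub g x" "b = Sub g y"
    | (Att) g x where "Att g x \<in> F" "g \<in> edges G" "x \<in> ends G g" "x \<notin> leaves G"
      "{a, b} = {Orig x, Sub g x}"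
    | (PendE) x k g where "PendE x k \<in> F" "x \<in> leaves G" "1 \<le> k" "k \<le> \<beta> x" "g \<in> edges G"
      "x \<in> ends G g" "{a, b} = {Pend x k, Sub g x}"
proof -
  obtain f where f: "f \<in> F" "ends (S2 G \<beta>) f = {a, b}" using ab unfolding adj_def by auto
  from wf loopless subsetD[OF F f(1)] show ?thesis
  proof (cases rule: S2_loopless_edgesE)
    case (Mid g x y)
    then show ?thesis using that(1)[of g x y] that(1)[of g y x] f by (auto simp: doubleton_eq_iff)
  next
    case (Att g x)
    then show ?thesis using that(2)[of g x] f by simp
  next
    case (PendE x k g)
    then show ?thesis using that(3)[of x k g] f by simp
  qed
qed

lemma S2_loopless_adj_Pend:
  assumes "wf_mgraph G" "\<forall>g\<in>edges G. card (ends G g) = 2" "F \<subseteq> edges (S2 G \<beta>)"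
    and "adj ((S2 G \<beta>)\<lparr>edges := F\<rparr>) (Pend x k) b"
  shows "\<exists>g. b = Sub g x \<and> PendE x k \<in> F \<and> g \<in> edges G \<and> x \<in> ends G g"
  using assms by (cases rule: S2_loopless_adjE) (auto simp: doubleton_eq_iff)

lemma S2_loopless_adj_Sub:
  assumes "wf_mgraph G" "\<forall>g\<in>edges G. card (ends G g) = 2" "F \<subseteq> edges (S2 G \<beta>)"
    and "adj ((S2 G \<beta>)\<lparr>edges := F\<rparr>) (Sub g x) b"
  shows "(\<exists>y. b = Sub g y \<and> Mid g \<in> F \<and> ends G g = {x, y} \<and> y \<noteq> x)
    \<or> (b = Orig x \<and> Att g x \<in> F \<and> x \<notin> leaves G)
    \<or> (\<exists>k. b = Pend x k \<and> PendE x k \<in> F \<and> x \<in> leaves G \<and> 1 \<le> k \<and> k \<le> \<beta> x)"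
  using assms by (cases rule: S2_loopless_adjE) (auto simp: doubleton_eq_iff insert_commute)

text \<open>In the 2-subdivision of a loopless graph \<open>G\<close> without isolated vertices, the subdivision
  vertices, matched along the \<open>Mid\<close> edges, form a paired-dominating set whose complement
  dominates. A recolouring modifies this partition: \<open>Orig x\<close> moves to \<open>P\<close> for \<open>x \<in> Q\<close>, matched
  with \<open>Sub (q x) x\<close> along \<open>Att (q x) x\<close>, and \<open>Sub g x\<close> moves to \<open>D\<close> for \<open>(g, x) \<in> Z\<close>. The
  assumptions are the local conditions on \<open>G\<close> under which the result is a DPDP-partition even
  after the edges in \<open>Del\<close> are removed.\<close>

locale S2_recolouring =
  fixes G :: "('a,'b) mgraph" and \<beta> :: "'a \<Rightarrow> nat"
    and Q :: "'a set" and q :: "'a \<Rightarrow> 'b" and Z :: "('b \<times> 'a) set" and Del :: "('a,'b) s2e set"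
  assumes wf: "wf_mgraph G" and loopless: "\<forall>g\<in>edges G. card (ends G g) = 2"
    and pendants: "\<forall>x\<in>leaves G. 1 \<le> \<beta> x"
    and no_isolated: "\<forall>x\<in>verts G. \<exists>g\<in>edges G. x \<in> ends G g"
    and Q_inner: "Q \<subseteq> verts G - leaves G"
    and Q_match: "\<And>x. x \<in> Q \<Longrightarrow> q x \<in> edges G \<and> x \<in> ends G (q x) \<and> (q x, x) \<notin> Z \<and> Att (q x) x \<notin> Del"
    and Q_dominated: "\<And>x. x \<in> Q \<Longrightarrow> \<exists>g\<in>edges G. x \<in> ends G g \<and> (g, x) \<in> Z \<and> Att g x \<notin> Del"
    and Mid_match: "\<And>g x y. g \<in> edges G \<Longrightarrow> ends G g = {x, y} \<Longrightarrow> y \<noteq> x \<Longrightarrow> (g, x) \<notin> Z \<Longrightarrow>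
      \<not> (x \<in> Q \<and> g = q x) \<Longrightarrow> (g, y) \<notin> Z \<and> \<not> (y \<in> Q \<and> g = q y) \<and> Mid g \<notin> Del"
    and Mid_dominated: "\<And>g x. g \<in> edges G \<Longrightarrow> x \<in> ends G g \<Longrightarrow> (g, x) \<notin> Z \<Longrightarrow>
      \<not> (x \<in> Q \<and> g = q x) \<Longrightarrow> x \<in> leaves G \<or> (x \<notin> Q \<and> Att g x \<notin> Del)"
    and Att_dominated: "\<And>x y. x \<in> Q \<Longrightarrow> y \<in> ends G (q x) \<Longrightarrow> y \<noteq> x \<Longrightarrow>
      (q x, y) \<in> Z \<and> Mid (q x) \<notin> Del"
    and Z_dominated: "\<And>g x. g \<in> edges G \<Longrightarrow> x \<in> ends G g \<Longrightarrow> (g, x) \<in> Z \<Longrightarrow>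
      (x \<in> Q \<and> Att g x \<notin> Del) \<or> (\<exists>y\<in>ends G g. y \<noteq> x \<and> (g, y) \<notin> Z \<and> Mid g \<notin> Del)"
    and Orig_dominated: "\<And>x. x \<in> verts G \<Longrightarrow> x \<notin> leaves G \<Longrightarrow> x \<notin> Q \<Longrightarrow>
      \<exists>g\<in>edges G. x \<in> ends G g \<and> (g, x) \<notin> Z \<and> Att g x \<notin> Del"
    and leaf_unchanged: "\<And>g x. x \<in> leaves G \<Longrightarrow> g \<in> edges G \<Longrightarrow> x \<in> ends G g \<Longrightarrow> (g, x) \<notin> Z"
    and PendE_kept: "\<And>x k. PendE x k \<notin> Del"
begin

abbreviation K :: "(('a,'b) s2v, ('a,'b) s2e) mgraph" where
  "K \<equiv> (S2 G \<beta>)\<lparr>edges := edges (S2 G \<beta>) - Del\<rparr>"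

definition P :: "('a,'b) s2v set" where
  "P = Orig ` Q \<union> {Sub g x | g x. g \<in> edges G \<and> x \<in> ends G g \<and> (g, x) \<notin> Z}"

lemma P_simps[simp]:
  "Orig x \<in> P \<longleftrightarrow> x \<in> Q"
  "Sub g x \<in> P \<longleftrightarrow> g \<in> edges G \<and> x \<in> ends G g \<and> (g, x) \<notin> Z"
  "Pend x k \<notin> P"
  by (auto simp: P_def)

lemma not_loop: "g \<in> edges G \<Longrightarrow> \<not> is_loop G g"
  using loopless by (auto simp: is_loop_def)

lemma ends_Mid: "g \<in> edges G \<Longrightarrow> ends (S2 G \<beta>) (Mid g) = (\<lambda>x. Sub g x) ` ends G g"
  using not_loop by simp

lemma ends_PendE:
  "x \<in> leaves G \<Longrightarrow> g \<in> edges G \<Longrightarrow> x \<in> ends G g \<Longrightarrow> ends (S2 G \<beta>) (PendE x k) = {Pend x k, Sub g x}"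
  using S2_ends_PendE[OF wf] by blast

lemma adj_K: "f \<in> edges (S2 G \<beta>) \<Longrightarrow> f \<notin> Del \<Longrightarrow> ends (S2 G \<beta>) f = {a, b} \<Longrightarrow> adj K a b"
  unfolding adj_def by (intro bexI[of _ f]) auto

lemma P_subset_verts: "P \<subseteq> verts K"
  using Q_inner not_loop by (auto simp: P_def)

definition partner_edge :: "('a,'b) s2v \<Rightarrow> ('a,'b) s2e" where
  "partner_edge a = (case a of Orig x \<Rightarrow> Att (q x) x
     | Sub g x \<Rightarrow> (if x \<in> Q \<and> g = q x then Att g x else Mid g) | _ \<Rightarrow> undefined)"

lemma Att_match:
  assumes "x \<in> Q"
  shows "Att (q x) x \<in> edges K" "ends K (Att (q x) x) = {Orig x, Sub (q x) x}"
    "{Orig x, Sub (q x) x} \<subseteq> P"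
  using Q_match[OF assms] Q_inner assms not_loop by auto

lemma Mid_match_edge:
  assumes "g \<in> edges G" "ends G g = {x, y}" "y \<noteq> x" "(g, x) \<notin> Z" "\<not> (x \<in> Q \<and> g = q x)"
  shows "Mid g \<in> edges K" "ends K (Mid g) = {Sub g x, Sub g y}" "{Sub g x, Sub g y} \<subseteq> P"
    "partner_edge (Sub g y) = Mid g"
  using Mid_match[OF assms] assms ends_Mid[OF assms(1)] by (auto simp: partner_edge_def)

lemma perfect_matching: "has_perfect_matching_on K P"
proof (rule has_perfect_matching_onI[where m = partner_edge])
  fix a assume a: "a \<in> P"
  let ?goal = "\<lambda>a. partner_edge a \<in> edges K \<and> card (ends K (partner_edge a)) = 2
    \<and> ends K (partner_edge a) \<subseteq> P \<and> a \<in> ends K (partner_edge a)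
    \<and> (\<forall>b\<in>ends K (partner_edge a). partner_edge b = partner_edge a)"
  have Orig: "?goal (Orig x)" if "x \<in> Q" for x
    using Att_match[OF that] that by (simp add: partner_edge_def)
  show "?goal a"
  proof (cases "a \<in> Orig ` Q")
    case True
    then show ?thesis using Orig by blast
  next
    case False
    then obtain g x where gx: "a = Sub g x" "g \<in> edges G" "x \<in> ends G g" "(g, x) \<notin> Z"
      using a by (auto simp: P_def)
    show ?thesis
    proof (cases "x \<in> Q \<and> g = q x")
      case True
      then show ?thesis using Orig[of x] gx by (simp add: partner_edge_def)
    next
      case False
      obtain y where y: "y \<noteq> x" "ends G g = {x, y}" using two_ends_other loopless gx by metis
      have "partner_edge a = Mid g" using gx(1) False by (simp add: partner_edge_def)
      then show ?thesis
        using Mid_match_edge[OF gx(2) y(2,1) gx(4) False] gx(1) y(1) by auto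
    qed
  qed
qed

lemma Sub_dominated:
  assumes gx: "g \<in> edges G" "x \<in> ends G g" "(g, x) \<notin> Z"
  shows "\<exists>u\<in>verts K - P. adj K u (Sub g x)"
proof -
  obtain y where y: "y \<noteq> x" "ends G g = {x, y}" using two_ends_other loopless gx by metis
  consider "x \<in> Q \<and> g = q x" | "x \<in> leaves G" | "\<not> (x \<in> Q \<and> g = q x)" "x \<notin> leaves G" by blast
  then show ?thesis
  proof cases
    case 1
    then have "(g, y) \<in> Z" "Mid g \<notin> Del" using Att_dominated y by auto
    moreover have "adj K (Sub g y) (Sub g x)"
      using adj_K[of "Mid g" "Sub g y" "Sub g x"] gx y ends_Mid \<open>Mid g \<notin> Del\<close>
      by (auto simp: insert_commute)
    ultimately show ?thesis using gx y not_loop by auto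
  next
    case 2
    have "adj K (Pend x 1) (Sub g x)"
      using adj_K[of "PendE x 1" "Pend x 1" "Sub g x"] ends_PendE[OF 2 gx(1,2)] PendE_kept 2 pendants gx
      by auto
    then show ?thesis using 2 pendants by auto
  next
    case 3
    then have "x \<notin> Q" "Att g x \<notin> Del" using Mid_dominated gx by blast+
    then have "adj K (Orig x) (Sub g x)" using adj_K[of "Att g x" "Orig x" "Sub g x"] 3 gx not_loop by auto
    then show ?thesis using \<open>x \<notin> Q\<close> 3 ends_subset_verts[OF wf gx(1,2)] by auto
  qed
qed

lemma P_dominated: "a \<in> P \<Longrightarrow> \<exists>u\<in>verts K - P. adj K u a"
proof (cases "a \<in> Orig ` Q")
  case True
  then obtain x where x: "a = Orig x" "x \<in> Q" by auto
  then obtain g where g: "g \<in> edges G" "x \<in> ends G g" "(g, x) \<in> Z" "Att g x \<notin> Del"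
    using Q_dominated by blast
  have "adj K (Sub g x) a"
    using adj_K[of "Att g x" "Sub g x" a] g x Q_inner not_loop by (auto simp: insert_commute)
  then show ?thesis using g not_loop by auto
next
  case False
  assume "a \<in> P"
  with False obtain g x where "a = Sub g x" "g \<in> edges G" "x \<in> ends G g" "(g, x) \<notin> Z"
    by (auto simp: P_def)
  then show ?thesis using Sub_dominated by blast
qed

lemma D_dominated: "a \<in> verts K - P \<Longrightarrow> \<exists>u\<in>P. adj K u a"
proof -
  assume a: "a \<in> verts K - P"
  then have "a \<in> verts (S2 G \<beta>)" by simp
  then show ?thesis
  proof (cases rule: S2_vertsE)
    case (Orig x)
    then obtain g where g: "g \<in> edges G" "x \<in> ends G g" "(g, x) \<notin> Z" "Att g x \<notin> Del"
      using Orig_dominated a by auto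
    have "adj K (Sub g x) a"
      using adj_K[of "Att g x" "Sub g x" a] g Orig not_loop by (auto simp: insert_commute)
    then show ?thesis using g by auto
  next
    case (Pend x k)
    have "x \<in> verts G" using Pend(2) by (simp add: leaves_def)
    then obtain g where g: "g \<in> edges G" "x \<in> ends G g" using no_isolated by blast
    have "adj K (Sub g x) a"
      using adj_K[of "PendE x k" "Sub g x" a] ends_PendE[OF Pend(2) g] Pend PendE_kept
      by (auto simp: insert_commute)
    then show ?thesis using g leaf_unchanged Pend by auto
  next
    case (Sub g x)
    then have "(g, x) \<in> Z" using a by simp
    then consider "x \<in> Q" "Att g x \<notin> Del"
      | y where "y \<in> ends G g" "y \<noteq> x" "(g, y) \<notin> Z" "Mid g \<notin> Del"
      using Z_dominated Sub by blast
    then show ?thesis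
    proof cases
      case 1
      have "adj K (Orig x) a" using adj_K[of "Att g x" "Orig x" a] 1 Sub Q_inner not_loop by auto
      then show ?thesis using 1 by auto
    next
      case (2 y)
      obtain y' where "y' \<noteq> x" "ends G g = {x, y'}" using two_ends_other loopless Sub by metis
      then have "ends G g = {x, y}" using 2 by auto
      then have "adj K (Sub g y) a" using adj_K[of "Mid g" "Sub g y" a] 2 Sub ends_Mid by auto
      then show ?thesis using 2 Sub by auto
    qed
  next
    case (LoopSub g b)
    then show ?thesis using not_loop by simp
  qed
qed

lemma DPDP: "DPDP K"
  by (rule DPDP_complementI[OF P_subset_verts perfect_matching P_dominated D_dominated])

end

lemma DPDP_S2_loopless:
  assumes "wf_mgraph G" "\<forall>g\<in>edges G. card (ends G g) = 2" "\<forall>x\<in>leaves G. 1 \<le> \<beta> x"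
    "\<forall>x\<in>verts G. \<exists>g\<in>edges G. x \<in> ends G g"
  shows "DPDP (S2 G \<beta>)"
proof -
  interpret S2_recolouring G \<beta> "{}" undefined "{}" "{}"
    by unfold_locales (use assms in auto)
  show ?thesis using DPDP by simp
qed

text \<open>A loop \<open>e\<close> at \<open>v\<close> becomes a triangle in \<open>S2 H\<close> and a 9-cycle in \<open>S2 (S2 H)\<close>. Recolouring
  that cycle puts both ends of its edge \<open>Mid (Mid e)\<close> into \<open>D\<close>, so the edge can go; \<open>Orig (Orig v)\<close>
  then has no \<open>P\<close>-neighbour on the cycle and is dominated through the second edge \<open>e'\<close>.\<close>

locale S2_S2_loop_and_edge =
  fixes H :: "('v,'e) mgraph" and \<alpha> :: "'v \<Rightarrow> nat" and \<beta> :: "('v,'e) s2v \<Rightarrow> nat"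
    and e :: 'e and v :: 'v and e' :: 'e
  assumes wf: "wf_mgraph H" and al: "\<forall>v\<in>leaves H. 1 \<le> \<alpha> v" and be: "\<forall>x\<in>leaves (S2 H \<alpha>). 1 \<le> \<beta> x"
    and ni: "\<forall>v\<in>verts H. \<exists>e\<in>edges H. v \<in> ends H e"
    and e: "e \<in> edges H" "is_loop H e" "v \<in> ends H e"
    and e': "e' \<in> edges H" "v \<in> ends H e'" "e' \<noteq> e"
begin

definition Q :: "('v,'e) s2v set" where
  "Q = {LoopSub e True, LoopSub e False}"

definition q :: "('v,'e) s2v \<Rightarrow> ('v,'e) s2e" where
  "q x = (case x of LoopSub _ b \<Rightarrow> LAtt e b | _ \<Rightarrow> Mid e)"

definition Z :: "(('v,'e) s2e \<times> ('v,'e) s2v) set" where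
  "Z = {(Mid e, LoopSub e b) | b. True} \<union> {(LAtt e b, Orig v) | b. True}"

abbreviation Del :: "(('v,'e) s2v, ('v,'e) s2e) s2e set" where
  "Del \<equiv> {Mid (Mid e)}"

lemma ends_e: "ends H e = {v}"
  using wf e by (cases rule: wf_mgraph_endsE) (auto simp: is_loop_def)

lemma Q_simps[simp]: "LoopSub f b \<in> Q \<longleftrightarrow> f = e" "Orig u \<notin> Q" "Sub f u \<notin> Q" "Pend u i \<notin> Q"
  by (cases b; auto simp: Q_def)+

lemma q_LoopSub[simp]: "q (LoopSub f b) = LAtt e b"
  by (simp add: q_def)

lemma Z_simps[simp]:
  "(Mid f, x) \<in> Z \<longleftrightarrow> f = e \<and> (\<exists>b. x = LoopSub e b)"
  "(LAtt f b, x) \<in> Z \<longleftrightarrow> f = e \<and> x = Orig v"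
  "(Att f u, x) \<notin> Z" "(PendE u i, x) \<notin> Z"
  by (auto simp: Z_def)

lemma Mid_match:
  assumes g: "g \<in> edges (S2 H \<alpha>)" "ends (S2 H \<alpha>) g = {x, y}" "y \<noteq> x" "(g, x) \<notin> Z"
    "\<not> (x \<in> Q \<and> g = q x)"
  shows "(g, y) \<notin> Z \<and> \<not> (y \<in> Q \<and> g = q y) \<and> Mid g \<notin> Del"
proof -
  have "\<not> (y \<in> Q \<and> g = q y)"
  proof
    assume "y \<in> Q \<and> g = q y"
    then obtain b where "y = LoopSub e b" "g = LAtt e b" by (auto simp: Q_def)
    then show False using g ends_e by (auto simp: doubleton_eq_iff)
  qed
  moreover from wf g(1) have "(g, y) \<notin> Z \<and> Mid g \<notin> Del"
  proof (cases rule: S2_edges_endsE)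
    case (MidL f u)
    then have "f \<noteq> e" using g(2,4) by (auto simp: doubleton_eq_iff)
    then show ?thesis using MidL by simp
  next
    case (LAtt f b u)
    then have "f \<noteq> e" using g(2,4,5) ends_e by (auto simp: doubleton_eq_iff)
    then show ?thesis using LAtt by simp
  qed (use e in auto)
  ultimately show ?thesis by blast
qed

lemma Mid_dominated:
  assumes g: "g \<in> edges (S2 H \<alpha>)" "x \<in> ends (S2 H \<alpha>) g" "(g, x) \<notin> Z" "\<not> (x \<in> Q \<and> g = q x)"
  shows "x \<in> leaves (S2 H \<alpha>) \<or> x \<notin> Q \<and> Att g x \<notin> Del"
proof -
  have "x \<notin> Q"
  proof
    assume "x \<in> Q"
    then obtain b where x: "x = LoopSub e b" by (auto simp: Q_def)
    from wf g(1) show False by (cases rule: S2_edges_endsE) (use x g in auto)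
  qed
  then show ?thesis by simp
qed

lemma Z_dominated:
  assumes "g \<in> edges (S2 H \<alpha>)" "x \<in> ends (S2 H \<alpha>) g" "(g, x) \<in> Z"
  shows "x \<in> Q \<and> Att g x \<notin> Del \<or> (\<exists>y\<in>ends (S2 H \<alpha>) g. y \<noteq> x \<and> (g, y) \<notin> Z \<and> Mid g \<notin> Del)"
proof -
  consider b where "g = Mid e" "x = LoopSub e b" | b where "g = LAtt e b" "x = Orig v"
    using assms by (auto simp: Z_def)
  then show ?thesis
  proof cases
    case (2 b)
    then show ?thesis by (intro disjI2 bexI[of _ "LoopSub e b"]) auto
  qed simp
qed

lemma Orig_dominated:
  assumes x: "x \<in> verts (S2 H \<alpha>)" "x \<notin> leaves (S2 H \<alpha>)" "x \<notin> Q"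
  shows "\<exists>g\<in>edges (S2 H \<alpha>). x \<in> ends (S2 H \<alpha>) g \<and> (g, x) \<notin> Z \<and> Att g x \<notin> Del"
  using x(1)
proof (cases rule: S2_vertsE)
  case (Orig u)
  obtain f where f: "f \<in> edges H" "u \<in> ends H f" "u = v \<longrightarrow> f \<noteq> e"
    using ni Orig e' by (cases "u = v") auto
  then show ?thesis using Orig
    by (cases "is_loop H f") (auto intro: bexI[of _ "LAtt f True"] bexI[of _ "Att f u"])
next
  case (Pend u i)
  then show ?thesis using x(2) S2_Pend_leaf_iff[OF wf] by simp
next
  case (Sub f u)
  then show ?thesis by (intro bexI[of _ "Mid f"]) auto
next
  case (LoopSub f b)
  then show ?thesis using x(3) by (intro bexI[of _ "Mid f"]) auto
qed

lemma Q_inner: "Q \<subseteq> verts (S2 H \<alpha>) - leaves (S2 H \<alpha>)"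
  using e S2_LoopSub_not_leaf[OF wf] by (auto simp: Q_def)

lemma Q_match:
  "x \<in> Q \<Longrightarrow> q x \<in> edges (S2 H \<alpha>) \<and> x \<in> ends (S2 H \<alpha>) (q x) \<and> (q x, x) \<notin> Z \<and> Att (q x) x \<notin> Del"
  using e by (auto simp: Q_def)

lemma Q_dominated: "x \<in> Q \<Longrightarrow> \<exists>g\<in>edges (S2 H \<alpha>). x \<in> ends (S2 H \<alpha>) g \<and> (g, x) \<in> Z \<and> Att g x \<notin> Del"
  using e by (auto simp: Q_def intro!: bexI[of _ "Mid e"])

lemma Att_dominated: "x \<in> Q \<Longrightarrow> y \<in> ends (S2 H \<alpha>) (q x) \<Longrightarrow> y \<noteq> x \<Longrightarrow> (q x, y) \<in> Z \<and> Mid (q x) \<notin> Del"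
  using ends_e by (auto simp: Q_def)

lemma leaf_unchanged: "x \<in> leaves (S2 H \<alpha>) \<Longrightarrow> g \<in> edges (S2 H \<alpha>) \<Longrightarrow> x \<in> ends (S2 H \<alpha>) g \<Longrightarrow> (g, x) \<notin> Z"
  by (auto simp: Z_def S2_leaves[OF wf al])

lemma recolouring: "S2_recolouring (S2 H \<alpha>) \<beta> Q q Z Del"
  using S2_wf[OF wf] S2_loopless[OF wf] be S2_no_isolated[OF ni] Q_inner Q_match Q_dominated
    Mid_match Mid_dominated Att_dominated Z_dominated Orig_dominated leaf_unchanged
  by (rule S2_recolouring.intro) (assumption | simp)+

lemma not_minimal: "\<not> minimal_DPDP (S2 (S2 H \<alpha>) \<beta>)"
proof
  assume min: "minimal_DPDP (S2 (S2 H \<alpha>) \<beta>)"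
  have "Mid (Mid e) \<in> edges (S2 (S2 H \<alpha>) \<beta>)" using e by simp
  from minimal_DPDP_delete_edge[OF min this] show False using S2_recolouring.DPDP[OF recolouring] by simp
qed

end

text \<open>At a loopless vertex \<open>w\<close> of degree at least two, \<open>Orig w\<close> and the vertices \<open>Sub e w\<close> with
  \<open>e \<noteq> e1\<close> move to \<open>P\<close>; afterwards both ends of the edge joining \<open>Orig (Sub e1 w)\<close> to the
  subdivision of \<open>Att e1 w\<close> lie in \<open>D\<close>, so that edge can go. A second edge at \<open>w\<close> supplies the
  \<open>D\<close>-neighbour of \<open>Orig w\<close>.\<close>

locale S2_S2_branch =
  fixes H :: "('v,'e) mgraph" and \<alpha> :: "'v \<Rightarrow> nat" and \<beta> :: "('v,'e) s2v \<Rightarrow> nat"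
    and w :: 'v and e1 :: 'e
  assumes wf: "wf_mgraph H" and al: "\<forall>v\<in>leaves H. 1 \<le> \<alpha> v" and be: "\<forall>x\<in>leaves (S2 H \<alpha>). 1 \<le> \<beta> x"
    and ni: "\<forall>v\<in>verts H. \<exists>e\<in>edges H. v \<in> ends H e"
    and w: "w \<in> verts H" "w \<notin> leaves H" and no_loop: "\<forall>e\<in>edges H. w \<in> ends H e \<longrightarrow> \<not> is_loop H e"
    and e1: "e1 \<in> edges H" "w \<in> ends H e1"
begin

definition Q :: "('v,'e) s2v set" where
  "Q = insert (Orig w) {Sub e w | e. e \<in> edges H \<and> w \<in> ends H e \<and> e \<noteq> e1}"

definition q :: "('v,'e) s2v \<Rightarrow> ('v,'e) s2e" where
  "q x = (case x of Sub e _ \<Rightarrow> Mid e | _ \<Rightarrow> Att e1 w)"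

definition Z :: "(('v,'e) s2e \<times> ('v,'e) s2v) set" where
  "Z = insert (Att e1 w, Sub e1 w) ({(Att e w, x) | e x. e \<noteq> e1} \<union>
      {(Mid e, Sub e u) | e u. e \<noteq> e1 \<and> w \<in> ends H e \<and> u \<noteq> w})"

abbreviation Del :: "(('v,'e) s2v, ('v,'e) s2e) s2e set" where
  "Del \<equiv> {Att (Att e1 w) (Sub e1 w)}"

lemma Q_simps[simp]:
  "Orig u \<in> Q \<longleftrightarrow> u = w" "Sub e u \<in> Q \<longleftrightarrow> u = w \<and> e \<in> edges H \<and> w \<in> ends H e \<and> e \<noteq> e1"
  "Pend u i \<notin> Q" "LoopSub e b \<notin> Q"
  by (auto simp: Q_def)

lemma QE:
  assumes "x \<in> Q"
  obtains "x = Orig w" | e where "x = Sub e w" "e \<in> edges H" "w \<in> ends H e" "e \<noteq> e1"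
  using assms by (auto simp: Q_def)

lemma q_simps[simp]: "q (Orig u) = Att e1 w" "q (Sub e u) = Mid e"
  by (simp_all add: q_def)

lemma Z_simps[simp]:
  "(Att e u, x) \<in> Z \<longleftrightarrow> u = w \<and> (e \<noteq> e1 \<or> x = Sub e1 w)"
  "(Mid e, x) \<in> Z \<longleftrightarrow> (\<exists>u. x = Sub e u \<and> u \<noteq> w) \<and> e \<noteq> e1 \<and> w \<in> ends H e"
  "(LAtt e b, x) \<notin> Z" "(PendE u i, x) \<notin> Z"
  by (auto simp: Z_def)

lemma Q_match:
  "x \<in> Q \<Longrightarrow> q x \<in> edges (S2 H \<alpha>) \<and> x \<in> ends (S2 H \<alpha>) (q x) \<and> (q x, x) \<notin> Z \<and> Att (q x) x \<notin> Del"
  by (erule QE) (use e1 w no_loop in auto)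

lemma Q_dominated:
  assumes "x \<in> Q"
  shows "\<exists>g\<in>edges (S2 H \<alpha>). x \<in> ends (S2 H \<alpha>) g \<and> (g, x) \<in> Z \<and> Att g x \<notin> Del"
  using assms
proof (cases rule: QE)
  case 1
  obtain e2 where e2: "e2 \<in> edges H" "w \<in> ends H e2" "e2 \<noteq> e1"
    using non_leaf_other_edge[OF wf w e1] no_loop e1 by blast
  then show ?thesis using 1 w no_loop by (intro bexI[of _ "Att e2 w"]) auto
next
  case (2 e)
  then show ?thesis using w no_loop by (intro bexI[of _ "Att e w"]) auto
qed

lemma Mid_match:
  assumes g: "g \<in> edges (S2 H \<alpha>)" "ends (S2 H \<alpha>) g = {x, y}" "y \<noteq> x" "(g, x) \<notin> Z"
    "\<not> (x \<in> Q \<and> g = q x)"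
  shows "(g, y) \<notin> Z \<and> \<not> (y \<in> Q \<and> g = q y) \<and> Mid g \<notin> Del"
  using wf g(1)
proof (cases rule: S2_edges_endsE)
  case (MidN e a b)
  then have "x = Sub e a \<and> y = Sub e b \<or> x = Sub e b \<and> y = Sub e a"
    using g(2,3) by (auto simp: doubleton_eq_iff)
  then obtain a' b' where x: "x = Sub e a'" "y = Sub e b'" "a' \<in> ends H e"
    using MidN by auto
  have "e = e1 \<or> w \<notin> ends H e" using g(4,5) x(1,3) MidN(1,2) by (cases "a' = w") auto
  then show ?thesis using x(2) MidN(1) by auto
next
  case (MidL e u)
  then show ?thesis using g(2) by (auto simp: doubleton_eq_iff)
next
  case (Att e u)
  then show ?thesis using g(2-5) by (auto simp: doubleton_eq_iff)
next
  case (LAtt e b u)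
  then have "u \<noteq> w" using no_loop by auto
  then show ?thesis using LAtt g(2) by (auto simp: doubleton_eq_iff)
next
  case (PendE u i e)
  then have "u \<noteq> w" using w by auto
  moreover have "y \<in> {Pend u i, Sub e u}" using PendE g(2) by auto
  ultimately show ?thesis using PendE(1) by auto
qed

lemma Mid_dominated:
  assumes g: "g \<in> edges (S2 H \<alpha>)" "x \<in> ends (S2 H \<alpha>) g" "(g, x) \<notin> Z" "\<not> (x \<in> Q \<and> g = q x)"
  shows "x \<in> leaves (S2 H \<alpha>) \<or> x \<notin> Q \<and> Att g x \<notin> Del"
proof -
  have "x \<notin> Q"
  proof
    assume "x \<in> Q"
    then show False
    proof (cases rule: QE)
      case 1
      from g(1) g(2)[unfolded 1] show False
        by (cases rule: S2_edges_at_OrigE) (use 1 g(3,4) no_loop in auto)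
    next
      case (2 e)
      then show False using S2_edges_at_Sub[OF g(1) g(2)[unfolded 2(1)]] g w by auto
    qed
  qed
  then show ?thesis using g(3) by auto
qed

lemma Att_dominated: "x \<in> Q \<Longrightarrow> y \<in> ends (S2 H \<alpha>) (q x) \<Longrightarrow> y \<noteq> x \<Longrightarrow> (q x, y) \<in> Z \<and> Mid (q x) \<notin> Del"
  using no_loop by (auto simp: Q_def)

lemma Z_dominated:
  assumes "g \<in> edges (S2 H \<alpha>)" "x \<in> ends (S2 H \<alpha>) g" "(g, x) \<in> Z"
  shows "x \<in> Q \<and> Att g x \<notin> Del \<or> (\<exists>y\<in>ends (S2 H \<alpha>) g. y \<noteq> x \<and> (g, y) \<notin> Z \<and> Mid g \<notin> Del)"
proof -
  consider "g = Att e1 w" "x = Sub e1 w" | e where "g = Att e w" "e \<noteq> e1" "x \<in> ends (S2 H \<alpha>) g"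
    | e u where "g = Mid e" "x = Sub e u" "u \<noteq> w" "e \<noteq> e1" "w \<in> ends H e" "e \<in> edges H"
    using assms by (auto simp: Z_def)
  then show ?thesis
  proof cases
    case 1
    then show ?thesis by (intro disjI2 bexI[of _ "Orig w"]) auto
  next
    case (2 e)
    then show ?thesis using assms(1) by auto
  next
    case (3 e u)
    then show ?thesis using no_loop by (intro disjI2 bexI[of _ "Sub e w"]) auto
  qed
qed

lemma Orig_dominated:
  assumes x: "x \<in> verts (S2 H \<alpha>)" "x \<notin> leaves (S2 H \<alpha>)" "x \<notin> Q"
  shows "\<exists>g\<in>edges (S2 H \<alpha>). x \<in> ends (S2 H \<alpha>) g \<and> (g, x) \<notin> Z \<and> Att g x \<notin> Del"
  using x(1)
proof (cases rule: S2_vertsE)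
  case (Orig u)
  obtain f where f: "f \<in> edges H" "u \<in> ends H f" using ni Orig by blast
  then show ?thesis using Orig x(3)
    by (cases "is_loop H f") (auto intro: bexI[of _ "LAtt f True"] bexI[of _ "Att f u"])
next
  case (Pend u i)
  then show ?thesis using x(2) S2_Pend_leaf_iff[OF wf] by simp
next
  case (Sub e u)
  consider "u = w" | "u \<noteq> w" "u \<in> leaves H" | "u \<noteq> w" "u \<notin> leaves H" by blast
  then show ?thesis
  proof cases
    case 1
    then show ?thesis using Sub x(3) by (intro bexI[of _ "Mid e"]) auto
  next
    case 2
    then show ?thesis using Sub al by (intro bexI[of _ "PendE u 1"]) (auto simp: S2_ends_PendE_raw)
  next
    case 3
    then show ?thesis using Sub by (intro bexI[of _ "Att e u"]) auto
  qed
next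
  case (LoopSub e b)
  then show ?thesis by (intro bexI[of _ "Mid e"]) auto
qed

lemma Q_inner: "Q \<subseteq> verts (S2 H \<alpha>) - leaves (S2 H \<alpha>)"
  using w no_loop S2_Orig_not_leaf[OF wf] S2_Sub_not_leaf[OF wf al] by (auto simp: Q_def)

lemma leaf_unchanged: "x \<in> leaves (S2 H \<alpha>) \<Longrightarrow> g \<in> edges (S2 H \<alpha>) \<Longrightarrow> x \<in> ends (S2 H \<alpha>) g \<Longrightarrow> (g, x) \<notin> Z"
  using S2_Pend_in_ends by (auto simp: Z_def S2_leaves[OF wf al])

lemma recolouring: "S2_recolouring (S2 H \<alpha>) \<beta> Q q Z Del"
  using S2_wf[OF wf] S2_loopless[OF wf] be S2_no_isolated[OF ni] Q_inner Q_match Q_dominated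
    Mid_match Mid_dominated Att_dominated Z_dominated Orig_dominated leaf_unchanged
  by (rule S2_recolouring.intro) (assumption | simp)+

lemma not_minimal: "\<not> minimal_DPDP (S2 (S2 H \<alpha>) \<beta>)"
proof
  assume min: "minimal_DPDP (S2 (S2 H \<alpha>) \<beta>)"
  have "Att (Att e1 w) (Sub e1 w) \<in> edges (S2 (S2 H \<alpha>) \<beta>)"
    using e1 w no_loop S2_Sub_not_leaf[OF wf al] by (simp add: is_loop_def)
  from minimal_DPDP_delete_edge[OF min this] show False using S2_recolouring.DPDP[OF recolouring] by simp
qed

end

text \<open>For a single loop, \<open>S2 H\<close> is a triangle and its 2-subdivision is the 9-cycle through the
  vertices \<open>c 0, \<dots>, c 8\<close>, with \<open>f j\<close> the edge from \<open>c j\<close> to \<open>c (j + 1)\<close>.\<close>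

locale S2_S2_loop =
  fixes H :: "('v,'e) mgraph" and \<alpha> :: "'v \<Rightarrow> nat" and \<beta> :: "('v,'e) s2v \<Rightarrow> nat"
    and e :: 'e and v :: 'v
  assumes wf: "wf_mgraph H" and al: "\<forall>v\<in>leaves H. 1 \<le> \<alpha> v"
    and loop: "edges H = {e}" "ends H e = {v}" "verts H = {v}"
begin

abbreviation G :: "(('v,'e) s2v, ('v,'e) s2e) mgraph" where "G \<equiv> S2 H \<alpha>"

abbreviation K :: "((('v,'e) s2v, ('v,'e) s2e) s2v, (('v,'e) s2v, ('v,'e) s2e) s2e) mgraph" where
  "K \<equiv> S2 G \<beta>"

definition c :: "nat \<Rightarrow> (('v,'e) s2v, ('v,'e) s2e) s2v" where
  "c = (!) [Orig (Orig v), Sub (LAtt e True) (Orig v), Sub (LAtt e True) (LoopSub e True),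
    Orig (LoopSub e True), Sub (Mid e) (LoopSub e True), Sub (Mid e) (LoopSub e False),
    Orig (LoopSub e False), Sub (LAtt e False) (LoopSub e False), Sub (LAtt e False) (Orig v)]"

definition f :: "nat \<Rightarrow> (('v,'e) s2v, ('v,'e) s2e) s2e" where
  "f = (!) [Att (LAtt e True) (Orig v), Mid (LAtt e True), Att (LAtt e True) (LoopSub e True),
    Att (Mid e) (LoopSub e True), Mid (Mid e), Att (Mid e) (LoopSub e False),
    Att (LAtt e False) (LoopSub e False), Mid (LAtt e False), Att (LAtt e False) (Orig v)]"

lemma is_loop: "is_loop H e"
  using loop by (simp add: is_loop_def)

lemma leaves_H: "leaves H = {}"
  using loop_end_not_leaf[OF wf _ is_loop] loop leaves_subset_verts[of H] by auto

lemma leaves_G: "leaves G = {}"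
  using S2_leaves[OF wf al] leaves_H by simp

lemma edges_G: "g \<in> edges G \<longleftrightarrow> g = Mid e \<or> g = LAtt e True \<or> g = LAtt e False"
  by (cases g) (auto simp: loop is_loop leaves_H)

lemma ends_G: "ends G (Mid e) = {LoopSub e True, LoopSub e False}"
  "ends G (LAtt e b) = {LoopSub e b, Orig v}"
  by (simp_all add: is_loop loop)

lemma not_loop_G: "\<not> is_loop G (Mid e)" "\<not> is_loop G (LAtt e b)"
  using ends_G by (simp_all add: is_loop_def)

lemma below_9: "i < 9 \<Longrightarrow> i = 0 \<or> i = 1 \<or> i = 2 \<or> i = 3 \<or> i = 4 \<or> i = 5 \<or> i = 6 \<or> i = 7 \<or> i = 8"
  for i :: nat by presburger

lemma ends_f: "j < 9 \<Longrightarrow> ends K (f j) = {c j, c ((j + 1) mod 9)}"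
  using below_9[of j] is_loop by (auto simp: c_def f_def loop not_loop_G)

lemma verts_c: "i < 9 \<Longrightarrow> c i \<in> verts K"
  using below_9[of i] loop is_loop not_loop_G leaves_H leaves_G by (auto simp: c_def)

lemma inj_c: "inj_on c {..<9}"
  unfolding c_def by (rule inj_on_nth) auto

lemma edges_K: "edges K \<subseteq> f ` {..<9}"
proof -
  have "edges K \<subseteq> {f 0, f 1, f 2, f 3, f 4, f 5, f 6, f 7, f 8}"
  proof
    fix g assume "g \<in> edges K"
    with S2_wf[OF wf] S2_loopless[OF wf] show "g \<in> {f 0, f 1, f 2, f 3, f 4, f 5, f 6, f 7, f 8}"
    proof (cases rule: S2_loopless_edgesE)
      case (Mid h x y)
      then show ?thesis using edges_G[of h] by (auto simp: f_def)
    next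
      case (Att h x)
      from Att(2) consider "h = Mid e" | b where "h = LAtt e b" using edges_G by blast
      then show ?thesis
      proof cases
        case 1
        then have "x = LoopSub e True \<or> x = LoopSub e False" using Att(3) ends_G by simp
        then show ?thesis using Att(1) 1 by (auto simp: f_def)
      next
        case (2 b)
        then have "x = LoopSub e b \<or> x = Orig v" using Att(3) loop(2) by simp
        then show ?thesis using Att(1) 2 by (cases b) (auto simp: f_def)
      qed
    qed (simp add: leaves_G)
  qed
  also have "\<dots> \<subseteq> f ` {..<9}" by auto
  finally show ?thesis .
qed

lemma DPDP_K: "DPDP K"
  using DPDP_S2_loopless[OF S2_wf[OF wf, of \<alpha>] S2_loopless[OF wf, of \<alpha>], of \<beta>] leaves_G
    S2_no_isolated[of H \<alpha>] loop
  by auto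

lemma minimal: "minimal_DPDP K"
  unfolding minimal_DPDP_def
proof (intro conjI allI impI DPDP_K notI)
  fix F assume F: "F \<subset> edges K" and "DPDP (K\<lparr>edges := F\<rparr>)"
  then have "f ` {..<9} \<subseteq> F"
    using DPDP_spanning_subgraph_cycle9[OF ends_f inj_c verts_c] edges_K by blast
  then show False using F edges_K by blast
qed

end

text \<open>For a single link \<open>uv\<close>, \<open>S2 H\<close> is a double star and its 2-subdivision is a tree in which
  pendant paths force every edge: the leaves lie in \<open>D\<close>, and the colouring propagates inwards.\<close>

locale S2_S2_link =
  fixes H :: "('v,'e) mgraph" and \<alpha> :: "'v \<Rightarrow> nat" and \<beta> :: "('v,'e) s2v \<Rightarrow> nat"
    and e :: 'e and u v :: 'v
  assumes wf: "wf_mgraph H" and al: "\<forall>v\<in>leaves H. 1 \<le> \<alpha> v" and be: "\<forall>x\<in>leaves (S2 H \<alpha>). 1 \<le> \<beta> x"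
    and link: "edges H = {e}" "ends H e = {u, v}" "u \<noteq> v" "verts H = {u, v}"
begin

abbreviation G :: "(('v,'e) s2v, ('v,'e) s2e) mgraph" where "G \<equiv> S2 H \<alpha>"

abbreviation K :: "((('v,'e) s2v, ('v,'e) s2e) s2v, (('v,'e) s2v, ('v,'e) s2e) s2e) mgraph" where
  "K \<equiv> S2 G \<beta>"

lemma not_loop: "\<not> is_loop H e"
  using link by (simp add: is_loop_def)

lemma leaves_H: "leaves H = {u, v}"
proof -
  have "degree H w = 1" if "w \<in> {u, v}" for w
  proof -
    have A: "{e'\<in>edges H. w \<in> ends H e' \<and> \<not> is_loop H e'} = {e}"
      and B: "{e'\<in>edges H. is_loop H e' \<and> w \<in> ends H e'} = {}" using link not_loop that by auto
    show ?thesis unfolding degree_eq_card_loops[OF wf] A B by simp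
  qed
  then show ?thesis using link(4) by (auto simp: leaves_def)
qed

lemma edges_G: "g \<in> edges G \<longleftrightarrow> g = Mid e \<or> (\<exists>w i. w \<in> {u, v} \<and> g = PendE w i \<and> 1 \<le> i \<and> i \<le> \<alpha> w)"
  by (cases g) (auto simp: link leaves_H not_loop)

lemma ends_Mid: "ends G (Mid e) = {Sub e u, Sub e v}"
  using link not_loop by simp

lemma ends_PendE: "w \<in> {u, v} \<Longrightarrow> ends G (PendE w i) = {Pend w i, Sub e w}"
  using S2_ends_PendE[OF wf, of w e \<alpha> i] link leaves_H by auto

lemma leaves_G: "x \<in> leaves G \<longleftrightarrow> (\<exists>w i. x = Pend w i \<and> w \<in> {u, v} \<and> 1 \<le> i \<and> i \<le> \<alpha> w)"
  using S2_leaves[OF wf al] leaves_H by auto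

lemma not_loop_G: "g \<in> edges G \<Longrightarrow> \<not> is_loop G g"
  using S2_loopless[OF wf] by (auto simp: is_loop_def)

lemma DPDP_K: "DPDP K"
  using DPDP_S2_loopless[OF S2_wf[OF wf, of \<alpha>] S2_loopless[OF wf, of \<alpha>], of \<beta>] be
    S2_no_isolated[of H \<alpha>] link
  by auto

context
  fixes F P
  assumes F: "F \<subseteq> edges K" and P: "DPDP_colouring (K\<lparr>edges := F\<rparr>) P"
begin

lemmas adj_Pend = S2_loopless_adj_Pend[OF S2_wf[OF wf] S2_loopless[OF wf] F]
  and adj_Sub = S2_loopless_adj_Sub[OF S2_wf[OF wf] S2_loopless[OF wf] F]

lemma pendant_path_forced:
  assumes w: "w \<in> {u, v}" and i: "1 \<le> i" "i \<le> \<alpha> w"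
  shows "(\<forall>k. 1 \<le> k \<and> k \<le> \<beta> (Pend w i) \<longrightarrow> PendE (Pend w i) k \<in> F)
    \<and> Mid (PendE w i) \<in> F \<and> Att (PendE w i) (Sub e w) \<in> F \<and> Orig (Sub e w) \<notin> P"
proof -
  let ?K' = "K\<lparr>edges := F\<rparr>"
  let ?s1 = "Sub (PendE w i) (Pend w i)" and ?s2 = "Sub (PendE w i) (Sub e w)"
  have leaf_nbr: "b = ?s1 \<and> PendE (Pend w i) k \<in> F" if "adj ?K' (Pend (Pend w i) k) b" for k b
    using adj_Pend[OF that] S2_Pend_in_ends[of _ H \<alpha> w i] by auto
  have leaf: "PendE (Pend w i) k \<in> F \<and> Pend (Pend w i) k \<notin> P \<and> ?s1 \<in> P"
    if k: "1 \<le> k" "k \<le> \<beta> (Pend w i)" for k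
  proof -
    have "Pend (Pend w i) k \<in> verts ?K'" using k w i leaves_G by simp
    from DPDP_colouring_pendant[OF P this, of ?s1] leaf_nbr show ?thesis by blast
  qed
  have s1_P: "?s1 \<in> P" using leaf[of 1] be w i leaves_G by auto
  have s1_nbr: "b = ?s2 \<and> Mid (PendE w i) \<in> F \<or> b \<notin> P" if "adj ?K' ?s1 b" for b
    using adj_Sub[OF that] ends_PendE[OF w] leaf leaves_G w i by (auto simp: doubleton_eq_iff)
  have s2: "adj ?K' ?s1 ?s2" "?s2 \<in> P"
    by (rule DPDP_colouring_forced_partner[OF P s1_P]; use s1_nbr in blast)+
  have s2_nbr: "b = Orig (Sub e w) \<and> Att (PendE w i) (Sub e w) \<in> F \<or> (b \<in> P \<longleftrightarrow> ?s2 \<in> P)"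
    if "adj ?K' ?s2 b" for b
    using adj_Sub[OF that] ends_PendE[OF w] s1_P s2(2) leaves_G by (auto simp: doubleton_eq_iff)
  have s2_verts: "?s2 \<in> verts ?K'" using edges_G w i not_loop_G ends_PendE[OF w] by simp
  have "adj ?K' ?s2 (Orig (Sub e w))" "Orig (Sub e w) \<in> P \<longleftrightarrow> ?s2 \<notin> P"
    by (rule DPDP_colouring_forced_opposite[OF P s2_verts]; use s2_nbr in blast)+
  then show ?thesis using s2 s1_nbr s2_nbr leaf by blast
qed

lemma Orig_Sub_not_P: "w \<in> {u, v} \<Longrightarrow> Orig (Sub e w) \<notin> P"
  using pendant_path_forced[of w 1] al leaves_H by auto

lemma middle_nbr:
  assumes ww: "w \<in> {u, v}" "w' \<in> {u, v}" "w' \<noteq> w" and "adj (K\<lparr>edges := F\<rparr>) (Sub (Mid e) (Sub e w)) b"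
  shows "b = Sub (Mid e) (Sub e w') \<and> Mid (Mid e) \<in> F \<or> b = Orig (Sub e w) \<and> Att (Mid e) (Sub e w) \<in> F"
  using adj_Sub[OF assms(4)] ww ends_Mid leaves_G by (auto simp: doubleton_eq_iff)

lemma middle_verts: "w \<in> {u, v} \<Longrightarrow> Sub (Mid e) (Sub e w) \<in> verts (K\<lparr>edges := F\<rparr>)"
  using ends_Mid edges_G not_loop_G by auto

text \<open>Both middle subdivision vertices lie in \<open>P\<close>: otherwise one of them would need the other as
  its only possible \<open>P\<close>-neighbour, and that one would have no neighbour in \<open>P\<close> at all.\<close>

lemma middle_in_P:
  assumes ww: "w \<in> {u, v}" "w' \<in> {u, v}" "w' \<noteq> w"
  shows "Sub (Mid e) (Sub e w) \<in> P"
proof (rule ccontr)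
  assume w_D: "Sub (Mid e) (Sub e w) \<notin> P"
  have "Sub (Mid e) (Sub e w') \<in> P"
    by (rule DPDP_colouring_forced_opposite(2)[OF P middle_verts[OF ww(1)], simplified w_D, simplified])
      (use middle_nbr[OF ww] Orig_Sub_not_P[OF ww(1)] w_D in blast)
  then have "Sub (Mid e) (Sub e w) \<in> P"
    by (rule DPDP_colouring_forced_partner(2)[OF P])
      (use middle_nbr[OF ww(2,1)] ww Orig_Sub_not_P[OF ww(2)] w_D in auto)
  then show False using w_D by contradiction
qed

lemma middle_edges_forced:
  assumes ww: "w \<in> {u, v}" "w' \<in> {u, v}" "w' \<noteq> w"
  shows "Mid (Mid e) \<in> F" "Att (Mid e) (Sub e w) \<in> F"
proof -
  have "adj (K\<lparr>edges := F\<rparr>) (Sub (Mid e) (Sub e w)) (Sub (Mid e) (Sub e w'))"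
    by (rule DPDP_colouring_forced_partner(1)[OF P middle_in_P[OF ww]])
      (use middle_nbr[OF ww] Orig_Sub_not_P[OF ww(1)] in blast)
  moreover have "adj (K\<lparr>edges := F\<rparr>) (Sub (Mid e) (Sub e w)) (Orig (Sub e w))"
    by (rule DPDP_colouring_forced_opposite(1)[OF P middle_verts[OF ww(1)]])
      (use middle_nbr[OF ww] middle_in_P[OF ww] middle_in_P[OF ww(2,1)] ww in blast)
  ultimately show "Mid (Mid e) \<in> F" "Att (Mid e) (Sub e w) \<in> F"
    using middle_nbr[OF ww] ww link(3) by blast+
qed

lemma all_edges_forced: "edges K \<subseteq> F"
proof
  fix g assume "g \<in> edges K"
  with S2_wf[OF wf] S2_loopless[OF wf] show "g \<in> F"
  proof (cases rule: S2_loopless_edgesE)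
    case (Mid h x y)
    then show ?thesis using edges_G[of h] pendant_path_forced middle_edges_forced[of u v] link(3) by auto
  next
    case (Att h x)
    then show ?thesis
      using edges_G[of h] ends_Mid ends_PendE pendant_path_forced middle_edges_forced[of u v]
        middle_edges_forced[of v u] link(3) leaves_G
      by auto
  next
    case (PendE x k h)
    then show ?thesis using leaves_G pendant_path_forced by auto
  qed
qed

end

lemma minimal: "minimal_DPDP K"
  unfolding minimal_DPDP_def
proof (intro conjI allI impI DPDP_K notI)
  fix F assume F: "F \<subset> edges K" and "DPDP (K\<lparr>edges := F\<rparr>)"
  then obtain P where "DPDP_colouring (K\<lparr>edges := F\<rparr>) P" using DPDP_colouring_exists by blast
  then have "edges K \<subseteq> F" using all_edges_forced F by blast
  then show False using F by blast
qed

end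

lemma not_DPDP_S2_S2_edgeless:
  assumes "edges H = {}" "v \<in> verts H"
  shows "\<not> DPDP (S2 (S2 H \<alpha>) \<beta>)"
proof
  have no_leaves: "leaves H = {}" using assms(1) by (auto simp: leaves_def degree_def)
  then have edgesG: "edges (S2 H \<alpha>) = {}" using assms(1) by (auto simp: S2_def)
  then have leavesG: "leaves (S2 H \<alpha>) = {}" by (auto simp: leaves_def degree_def)
  have edgesK: "edges (S2 (S2 H \<alpha>) \<beta>) = {}" using edgesG leavesG by (auto simp: S2_def)
  have "Orig (Orig v) \<in> verts (S2 (S2 H \<alpha>) \<beta>)" using assms(2) no_leaves leavesG by simp
  moreover assume "DPDP (S2 (S2 H \<alpha>) \<beta>)"
  ultimately have "\<exists>b. adj (S2 (S2 H \<alpha>) \<beta>) (Orig (Orig v)) b" by (rule DPDP_no_isolated[rotated])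
  then show False using edgesK by (simp add: adj_def)
qed

lemma minimal_DPDP_S2_S2_single_edge:
  fixes H :: "('v,'e) mgraph" and \<beta> :: "('v,'e) s2v \<Rightarrow> nat"
  assumes wf: "wf_mgraph H" and conn: "connected H" and al: "\<forall>v\<in>leaves H. 1 \<le> \<alpha> v"
    and be: "\<forall>x\<in>leaves (S2 H \<alpha>). 1 \<le> \<beta> x" and E: "edges H = {e}"
  shows "minimal_DPDP (S2 (S2 H \<alpha>) \<beta>)"
proof -
  have V: "verts H = ends H e" using connected_edge_at_ends_unique(2)[OF wf conn] E by blast
  have "e \<in> edges H" using E by simp
  with wf show ?thesis
  proof (cases rule: wf_mgraph_endsE)
    case (loop v)
    then show ?thesis using S2_S2_loop.minimal[of H \<alpha> e v \<beta>] wf al E V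
      unfolding S2_S2_loop_def by simp
  next
    case (nonloop a b)
    then show ?thesis using S2_S2_link.minimal[of H \<alpha> \<beta> e a b] wf al be E V
      unfolding S2_S2_link_def by simp
  qed
qed

lemma minimal_DPDP_S2_S2_imp_card_edges_1:
  fixes H :: "('v,'e) mgraph" and \<beta> :: "('v,'e) s2v \<Rightarrow> nat"
  assumes wf: "wf_mgraph H" and conn: "connected H" and al: "\<forall>v\<in>leaves H. 1 \<le> \<alpha> v"
    and be: "\<forall>x\<in>leaves (S2 H \<alpha>). 1 \<le> \<beta> x" and min: "minimal_DPDP (S2 (S2 H \<alpha>) \<beta>)"
  shows "card (edges H) = 1"
proof (rule ccontr)
  assume card: "card (edges H) \<noteq> 1"
  obtain v where v: "v \<in> verts H" using conn unfolding connected_def by blast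
  have "edges H \<noteq> {}" using not_DPDP_S2_S2_edgeless[OF _ v] min unfolding minimal_DPDP_def by blast
  then obtain e0 where e0: "e0 \<in> edges H" by blast
  note ni = connected_no_isolated[OF wf conn e0]
  from wf conn e0 card show False
  proof (cases rule: connected_card_edges_ne_1E)
    case (loop_and_edge e v e')
    then show False using S2_S2_loop_and_edge.not_minimal[of H \<alpha> \<beta> e v e'] wf al be ni min
      unfolding S2_S2_loop_and_edge_def by blast
  next
    case (branch w e)
    then show False using S2_S2_branch.not_minimal[of H \<alpha> \<beta> w e] wf al be ni min
      unfolding S2_S2_branch_def by blast
  qed
qed

theorem corollary6p4:
  fixes H :: "('v,'e) mgraph" and \<alpha> :: "'v \<Rightarrow> nat"
    and \<beta> :: "('v,'e) s2v \<Rightarrow> nat"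
  assumes "wf_mgraph H" and "connected H"
    and "\<forall>v\<in>leaves H. 1 \<le> \<alpha> v"
    and "\<forall>x\<in>leaves (S2 H \<alpha>). 1 \<le> \<beta> x"
  shows "minimal_DPDP (S2 (S2 H \<alpha>) \<beta>) \<longleftrightarrow> card (edges H) = 1"
proof
  assume "card (edges H) = 1"
  then obtain e where "edges H = {e}" by (rule card_1_singletonE)
  then show "minimal_DPDP (S2 (S2 H \<alpha>) \<beta>)" by (rule minimal_DPDP_S2_S2_single_edge[OF assms])
qed (rule minimal_DPDP_S2_S2_imp_card_edges_1[OF assms])

end
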